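(* Let $S=[0,1]\times[0,1]$ and $R=[0,a]\times[0,a^{p-1}]$ for some $a\ge1$ and $1<p<2$. Let $L\ge1$ and let $f:(\partial S,\|\cdot\|_{a,p})\to(\partial R,|\cdot|)$ be an orientation preserving $L$-bilipschitz homeomorphism which maps the edges of $S$ to those of $R$. Then there exists a homeomorphism $F:S\to R$ extending $f$ such that $|DF|^p\le C(L,p)\,J_F$ almost everywhere in $S$, where $C(L,p)$ depends only on $L$ and $p$.
   Context: For $a\ge1$ and $1<p<2$, $\|\cdot\|_{a,p}:\mathbb R^2\to[0,\infty)$ is $\|(x_1,x_2)\|_{a,p}=\max\{a|x_1|,\,a^{p-1}|x_2|\}$; the domain $\partial S$ is equipped with the metric $(u,v)\mapsto\|u-v\|_{a,p}$ and $\partial R$ with the Euclidean metric. $|DF|$ is the operator norm of the differential and $J_F$ the Jacobian determinant. *)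

theory Defs
  imports "HOL-Analysis.Analysis" "HOL-Complex_Analysis.Complex_Analysis"
begin

text \<open>Points of the plane are modelled as \<open>real^2\<close>; coordinate 1 is x, coordinate 2 is y.\<close>

definition pt :: "real \<Rightarrow> real \<Rightarrow> real^2" where
  "pt x y = vector [x, y]"

definition rect :: "real \<Rightarrow> real \<Rightarrow> (real^2) set" where
  "rect w h = {z. 0 \<le> z$1 \<and> z$1 \<le> w \<and> 0 \<le> z$2 \<and> z$2 \<le> h}"

definition rect_edges :: "real \<Rightarrow> real \<Rightarrow> (real^2) set set" where
  "rect_edges w h =
     {closed_segment (pt 0 0) (pt w 0), closed_segment (pt w 0) (pt w h),
      closed_segment (pt w h) (pt 0 h), closed_segment (pt 0 h) (pt 0 0)}"

definition norm_ap :: "real \<Rightarrow> real \<Rightarrow> real^2 \<Rightarrow> real" where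
  "norm_ap a p z = max (a * \<bar>z$1\<bar>) (a powr (p - 1) * \<bar>z$2\<bar>)"

definition toC :: "real^2 \<Rightarrow> complex" where
  "toC z = Complex (z$1) (z$2)"

definition ofC :: "complex \<Rightarrow> real^2" where
  "ofC z = pt (Re z) (Im z)"

definition rect_loop :: "real \<Rightarrow> real \<Rightarrow> real \<Rightarrow> complex" where
  "rect_loop w h =
     linepath 0 (Complex w 0) +++ linepath (Complex w 0) (Complex w h) +++
     linepath (Complex w h) (Complex 0 h) +++ linepath (Complex 0 h) 0"

text \<open>A homeomorphism f from the boundary of [0,w1]x[0,h1] onto the boundary of
  [0,w2]x[0,h2] is orientation preserving iff the image of the positively oriented
  boundary loop winds once positively around (any, here the centre) interior point
  of the target rectangle.\<close>
definition bdry_orientation_preserving ::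
  "(real^2 \<Rightarrow> real^2) \<Rightarrow> real \<Rightarrow> real \<Rightarrow> real \<Rightarrow> real \<Rightarrow> bool" where
  "bdry_orientation_preserving f w1 h1 w2 h2 \<longleftrightarrow>
     winding_number (toC \<circ> f \<circ> ofC \<circ> rect_loop w1 h1) (Complex (w2/2) (h2/2)) = 1"

end

theory Submission
  imports Defs
begin

text \<open>Each edge map of \<open>f\<close>, pulled back through an edge-preserving affine map of the unit square
  onto \<open>R\<close>, is an \<open>L\<^sup>2\<close>-bi-Lipschitz self-map of \<open>[0,1]\<close> fixing 0 and 1.  Such boundary data are
  extended to the square by a map that preserves every horizontal line and interpolates between
  the bottom and top edge maps, smoothed by averaging over windows of length \<open>y(1-y)\<close>; the same
  construction conjugated by the coordinate swap takes care of the vertical edges.  The composite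
  has differential bounded by \<open>50 K\<^sup>8\<close> and Jacobian at least \<open>K\<^sup>-\<^sup>4\<close>, \<open>K = L\<^sup>2\<close>.  Since \<open>f\<close> preserves
  orientation, the affine map is \<open>diag(a, a\<^sup>p\<^sup>-\<^sup>1)\<close> up to a rotation of the square; it multiplies the
  norm of the differential by at most \<open>2a\<close> and the Jacobian by exactly \<open>a\<^sup>p\<close>, which gives
  \<open>|DF|\<^sup>p \<le> C(L,p) J\<^sub>F\<close>.\<close>

no_notation fps_nth (infixl \<open>$\<close> 75)

lemma pt_nth [simp]: "pt x y $ 1 = x" "pt x y $ 2 = y"
  by (simp_all add: pt_def)

lemma vec2_eq_iff: "(z::real^2) = w \<longleftrightarrow> z$1 = w$1 \<and> z$2 = w$2"
  by (metis (mono_tags) exhaust_2 vec_eq_iff)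

lemma pt_eta: "pt (z$1) (z$2) = z"
  by (simp add: vec2_eq_iff)

lemma pt_eq_iff [simp]: "pt x y = pt u v \<longleftrightarrow> x = u \<and> y = v"
  by (simp add: vec2_eq_iff)

lemma pt_arith [simp]:
  "pt x y + pt u v = pt (x+u) (y+v)" "pt x y - pt u v = pt (x-u) (y-v)"
  "c *\<^sub>R pt x y = pt (c*x) (c*y)" "- pt x y = pt (-x) (-y)" "(0::real^2) = pt 0 0"
  by (simp_all add: vec2_eq_iff)

lemma pt_as_sum: "pt u w = u *\<^sub>R pt 1 0 + w *\<^sub>R pt 0 1"
  by (simp add: vec2_eq_iff)

lemma norm_pt: "norm (pt x y) = sqrt (x^2 + y^2)"
  by (simp add: norm_vec_def L2_set_def sum_2 power2_eq_square)

lemma closed_segment_real: "(t::real) \<in> closed_segment a b \<longleftrightarrow> min a b \<le> t \<and> t \<le> max a b"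
  by (auto simp: closed_segment_eq_real_ivl min_def max_def)

lemma closed_segment_horizontal:
  "closed_segment (pt x0 y) (pt x1 y) = {z. z$2 = y \<and> min x0 x1 \<le> z$1 \<and> z$1 \<le> max x0 x1}"
proof -
  have "z \<in> closed_segment (pt x0 y) (pt x1 y) \<longleftrightarrow> z$2 = y \<and> z$1 \<in> closed_segment x0 x1" for z
  proof
    assume "z \<in> closed_segment (pt x0 y) (pt x1 y)"
    then obtain u where "0 \<le> u" "u \<le> 1" "z = (1-u) *\<^sub>R pt x0 y + u *\<^sub>R pt x1 y"
      by (auto simp: in_segment)
    then show "z$2 = y \<and> z$1 \<in> closed_segment x0 x1"
      by (auto simp: in_segment algebra_simps)
  next
    assume "z$2 = y \<and> z$1 \<in> closed_segment x0 x1"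
    then obtain u where u: "0 \<le> u" "u \<le> 1" "z$1 = (1-u) * x0 + u * x1" "z$2 = y"
      by (auto simp: in_segment)
    then have "z = (1-u) *\<^sub>R pt x0 y + u *\<^sub>R pt x1 y" by (auto simp: vec2_eq_iff algebra_simps)
    with u show "z \<in> closed_segment (pt x0 y) (pt x1 y)" by (auto simp: in_segment)
  qed
  then show ?thesis unfolding closed_segment_real by blast
qed

lemma closed_segment_vertical:
  "closed_segment (pt x y0) (pt x y1) = {z. z$1 = x \<and> min y0 y1 \<le> z$2 \<and> z$2 \<le> max y0 y1}"
proof -
  have "z \<in> closed_segment (pt x y0) (pt x y1) \<longleftrightarrow> z$1 = x \<and> z$2 \<in> closed_segment y0 y1" for z
  proof
    assume "z \<in> closed_segment (pt x y0) (pt x y1)"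
    then obtain u where "0 \<le> u" "u \<le> 1" "z = (1-u) *\<^sub>R pt x y0 + u *\<^sub>R pt x y1"
      by (auto simp: in_segment)
    then show "z$1 = x \<and> z$2 \<in> closed_segment y0 y1"
      by (auto simp: in_segment algebra_simps)
  next
    assume "z$1 = x \<and> z$2 \<in> closed_segment y0 y1"
    then obtain u where u: "0 \<le> u" "u \<le> 1" "z$2 = (1-u) * y0 + u * y1" "z$1 = x"
      by (auto simp: in_segment)
    then have "z = (1-u) *\<^sub>R pt x y0 + u *\<^sub>R pt x y1" by (auto simp: vec2_eq_iff algebra_simps)
    with u show "z \<in> closed_segment (pt x y0) (pt x y1)" by (auto simp: in_segment)
  qed
  then show ?thesis unfolding closed_segment_real by blast
qed

lemma mem_rect: "z \<in> rect w h \<longleftrightarrow> 0 \<le> z$1 \<and> z$1 \<le> w \<and> 0 \<le> z$2 \<and> z$2 \<le> h"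
  by (simp add: rect_def)

lemma rect_eq_cbox: "rect w h = cbox (pt 0 0) (pt w h)"
  by (auto simp: rect_def mem_box_cart(2) forall_2)

lemma compact_rect: "compact (rect w h)"
  by (simp add: rect_eq_cbox)

lemma frontier_rect:
  assumes "0 < w" "0 < h"
  shows "frontier (rect w h) = {z \<in> rect w h. z$1 = 0 \<or> z$1 = w \<or> z$2 = 0 \<or> z$2 = h}"
proof -
  have "pt (w/2) (h/2) \<in> box (pt 0 0) (pt w h)" using assms by (auto simp: mem_box_cart forall_2)
  then have "frontier (rect w h) = cbox (pt 0 0) (pt w h) - box (pt 0 0) (pt w h)"
    unfolding rect_eq_cbox by (metis empty_iff frontier_cbox)
  moreover have "z \<in> cbox (pt 0 0) (pt w h) - box (pt 0 0) (pt w h) \<longleftrightarrow>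
     z \<in> rect w h \<and> (z$1 = 0 \<or> z$1 = w \<or> z$2 = 0 \<or> z$2 = h)" for z
    unfolding Diff_iff mem_box_cart forall_2 mem_rect by auto
  ultimately show ?thesis by blast
qed

lemma interior_rect: "interior (rect w h) = {z. 0 < z$1 \<and> z$1 < w \<and> 0 < z$2 \<and> z$2 < h}"
  unfolding rect_eq_cbox interior_cbox by (auto simp: mem_box_cart forall_2)

lemma frontier_unit_square_cases:
  assumes "x \<in> frontier (rect 1 1)"
  obtains s where "0 \<le> s" "s \<le> 1" "x = pt s 0 \<or> x = pt s 1 \<or> x = pt 0 s \<or> x = pt 1 s"
proof -
  have "(x$2 = 0 \<or> x$2 = 1) \<and> 0 \<le> x$1 \<and> x$1 \<le> 1 \<or> (x$1 = 0 \<or> x$1 = 1) \<and> 0 \<le> x$2 \<and> x$2 \<le> 1"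
    using assms by (auto simp: frontier_rect mem_rect)
  then show ?thesis using that[of "x$1"] that[of "x$2"] by (auto simp: vec2_eq_iff)
qed

lemma AE_lebesgue_on_rect_if_interior:
  assumes "\<And>x. x \<in> interior (rect w h) \<Longrightarrow> P x"
  shows "AE x in lebesgue_on (rect w h). P x"
proof -
  have N: "cbox (pt 0 0) (pt w h) - box (pt 0 0) (pt w h) \<in> null_sets lebesgue"
    using negligible_frontier_interval negligible_iff_null_sets by blast
  have "AE x in lebesgue. x \<in> rect w h \<longrightarrow> P x"
    by (rule AE_I'[OF N]) (use assms in \<open>auto simp: rect_eq_cbox interior_cbox\<close>)
  then show ?thesis by (simp add: AE_restrict_space_iff rect_eq_cbox)
qed

section \<open>Smoothing bi-Lipschitz maps of the unit interval\<close>

locale bilip01 =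
  fixes K :: real and \<phi> :: "real \<Rightarrow> real"
  assumes K_ge_1: "1 \<le> K" and at_0: "\<phi> 0 = 0" and at_1: "\<phi> 1 = 1"
    and bilip: "\<And>s t. 0 \<le> s \<Longrightarrow> s \<le> t \<Longrightarrow> t \<le> 1 \<Longrightarrow>
      (t - s) / K \<le> \<phi> t - \<phi> s \<and> \<phi> t - \<phi> s \<le> K * (t - s)"

text \<open>\<open>ext01 \<phi>\<close> continues \<open>\<phi>\<close> with slope 1 outside \<open>[0,1]\<close>, so it is \<open>K\<close>-bi-Lipschitz on the whole
  line; \<open>prim \<phi>\<close> is a primitive of it, used only through differences at arguments \<open>> -2\<close>.\<close>

definition clamp01 :: "real \<Rightarrow> real" where
  "clamp01 x = max 0 (min 1 x)"

definition ext01 :: "(real \<Rightarrow> real) \<Rightarrow> real \<Rightarrow> real" where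
  "ext01 \<phi> x = \<phi> (clamp01 x) + (x - clamp01 x)"

definition prim :: "(real \<Rightarrow> real) \<Rightarrow> real \<Rightarrow> real" where
  "prim \<phi> x = integral {-2..x} (ext01 \<phi>)"

text \<open>\<open>window_diff \<phi> x h = \<integral>\<^sub>0\<^sup>h (ext01 \<phi> (x + t) - ext01 \<phi> t) dt\<close>; dividing by its value at
  \<open>x = 1\<close> gives an average of \<open>\<phi>\<close> over windows of length \<open>h\<close> that still fixes 0 and 1.\<close>

definition window_diff :: "(real \<Rightarrow> real) \<Rightarrow> real \<Rightarrow> real \<Rightarrow> real" where
  "window_diff \<phi> x h = prim \<phi> (x + h) - prim \<phi> x - prim \<phi> h + prim \<phi> 0"

definition smoothing :: "(real \<Rightarrow> real) \<Rightarrow> real \<Rightarrow> real \<Rightarrow> real" where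
  "smoothing \<phi> x h = (if h = 0 then \<phi> x else window_diff \<phi> x h / window_diff \<phi> 1 h)"

definition smoothing_dx :: "(real \<Rightarrow> real) \<Rightarrow> real \<Rightarrow> real \<Rightarrow> real" where
  "smoothing_dx \<phi> x h = (ext01 \<phi> (x + h) - ext01 \<phi> x) / window_diff \<phi> 1 h"

definition smoothing_dh :: "(real \<Rightarrow> real) \<Rightarrow> real \<Rightarrow> real \<Rightarrow> real" where
  "smoothing_dh \<phi> x h =
     ((ext01 \<phi> (x + h) - ext01 \<phi> h) * window_diff \<phi> 1 h
      - window_diff \<phi> x h * (ext01 \<phi> (1 + h) - ext01 \<phi> h)) / (window_diff \<phi> 1 h)^2"

context bilip01
begin

lemma K_pos: "0 < K"
  using K_ge_1 by simp

lemma range01: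
  assumes "0 \<le> x" "x \<le> 1"
  shows "0 \<le> \<phi> x \<and> \<phi> x \<le> 1"
proof -
  have "0 \<le> x / K" "0 \<le> (1 - x) / K" using assms K_pos by simp_all
  moreover have "x / K \<le> \<phi> x" "(1 - x) / K \<le> 1 - \<phi> x"
    using bilip[of 0 x] bilip[of x 1] assms at_0 at_1 by simp_all
  ultimately show ?thesis by linarith
qed

lemma ext01_eq: "0 \<le> x \<Longrightarrow> x \<le> 1 \<Longrightarrow> ext01 \<phi> x = \<phi> x"
  by (simp add: ext01_def clamp01_def)

lemma ext01_0: "ext01 \<phi> 0 = 0" and ext01_1: "ext01 \<phi> 1 = 1"
  by (simp_all add: ext01_eq at_0 at_1)

lemma ext01_bilip:
  assumes "s \<le> t"
  shows "(t - s) / K \<le> ext01 \<phi> t - ext01 \<phi> s \<and> ext01 \<phi> t - ext01 \<phi> s \<le> K * (t - s)"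
proof -
  define d where "d = clamp01 t - clamp01 s"
  have c: "0 \<le> clamp01 s" "clamp01 s \<le> clamp01 t" "clamp01 t \<le> 1" "d \<le> t - s"
    using assms by (auto simp: clamp01_def d_def)
  have b: "d / K \<le> \<phi> (clamp01 t) - \<phi> (clamp01 s)" "\<phi> (clamp01 t) - \<phi> (clamp01 s) \<le> K * d"
    using bilip[OF c(1-3)] by (auto simp: d_def)
  have e: "(t - s - d) / K \<le> t - s - d" "t - s - d \<le> K * (t - s - d)"
    using c(4) K_ge_1 by (simp_all add: divide_le_eq mult_le_cancel_right1 mult_le_cancel_left1)
  have "ext01 \<phi> t - ext01 \<phi> s = (\<phi> (clamp01 t) - \<phi> (clamp01 s)) + (t - s - d)"
    by (simp add: ext01_def d_def)
  moreover have "(t - s) / K = d / K + (t - s - d) / K"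
    by (simp add: diff_divide_distrib)
  ultimately show ?thesis using b e by (simp add: algebra_simps)
qed

lemma ext01_lipschitz: "\<bar>ext01 \<phi> t - ext01 \<phi> s\<bar> \<le> K * \<bar>t - s\<bar>"
proof (cases "s \<le> t")
  case True
  have "0 \<le> (t - s) / K" using True K_pos by simp
  then show ?thesis using ext01_bilip[OF True] True by (simp add: abs_of_nonneg)
next
  case False
  have "0 \<le> (s - t) / K" using False K_pos by simp
  then show ?thesis using ext01_bilip[of t s] False by (simp add: abs_if)
qed

lemma lipschitz: "0 \<le> s \<Longrightarrow> s \<le> 1 \<Longrightarrow> 0 \<le> t \<Longrightarrow> t \<le> 1 \<Longrightarrow> \<bar>\<phi> t - \<phi> s\<bar> \<le> K * \<bar>t - s\<bar>"
  using ext01_lipschitz[of t s] by (simp add: ext01_eq)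

lemma ext01_lipschitz_within:
  "\<bar>t - s\<bar> \<le> h \<Longrightarrow> \<bar>ext01 \<phi> t - ext01 \<phi> s\<bar> \<le> K * h"
  using ext01_lipschitz[of t s] K_pos mult_left_mono[of "\<bar>t - s\<bar>" h K] by linarith

lemma continuous_on_ext01: "continuous_on A (ext01 \<phi>)"
proof -
  have "lipschitz_on K UNIV (ext01 \<phi>)"
    using ext01_lipschitz K_pos by (auto simp: lipschitz_on_def dist_real_def)
  then show ?thesis
    using lipschitz_on_continuous_on continuous_on_subset by blast
qed

lemma prim_deriv: "x > -2 \<Longrightarrow> (prim \<phi> has_real_derivative ext01 \<phi> x) (at x)"
proof -
  assume x: "x > -2"
  have "((\<lambda>u. integral {-2..u} (ext01 \<phi>)) has_real_derivative ext01 \<phi> x) (at x within {-2..x+1})"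
    by (rule integral_has_real_derivative) (use x continuous_on_ext01 in auto)
  moreover have "x \<in> interior {-2..x+1}" using x by simp
  ultimately show ?thesis unfolding prim_def using at_within_interior by metis
qed

lemma prim_shift_deriv:
  assumes "c + t > -2"
  shows "((\<lambda>t. prim \<phi> (c + t)) has_real_derivative ext01 \<phi> (c + t)) (at t)"
proof -
  have "((\<lambda>t. prim \<phi> (c + t)) has_real_derivative ext01 \<phi> (c + t) * 1) (at t)"
    by (rule DERIV_chain2[of "prim \<phi>" _ "\<lambda>t. c + t", OF prim_deriv[OF assms]])
      (auto intro!: derivative_eq_intros)
  then show ?thesis by simp
qed

lemma window_diff_deriv_h:
  assumes "x + h > -2" "h > -2"
  shows "((\<lambda>h. window_diff \<phi> x h) has_real_derivative (ext01 \<phi> (x + h) - ext01 \<phi> h)) (at h)"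
proof -
  have "((\<lambda>h. prim \<phi> (x + h) - prim \<phi> x - prim \<phi> h + prim \<phi> 0) has_real_derivative
      (ext01 \<phi> (x + h) - 0 - ext01 \<phi> h + 0)) (at h)"
    by (intro DERIV_add DERIV_diff prim_shift_deriv prim_deriv DERIV_const) (use assms in auto)
  then show ?thesis unfolding window_diff_def by simp
qed

lemma window_diff_deriv_x:
  assumes "x > -2" "x + h > -2"
  shows "((\<lambda>x. window_diff \<phi> x h) has_real_derivative (ext01 \<phi> (x + h) - ext01 \<phi> x)) (at x)"
proof -
  have "((\<lambda>x. prim \<phi> (h + x) - prim \<phi> x - prim \<phi> h + prim \<phi> 0) has_real_derivative
      (ext01 \<phi> (h + x) - ext01 \<phi> x - 0 + 0)) (at x)"
    by (intro DERIV_add DERIV_diff prim_shift_deriv prim_deriv DERIV_const) (use assms in auto)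
  then show ?thesis unfolding window_diff_def by (simp add: add.commute)
qed

lemma window_diff_mvt:
  assumes "x \<ge> -1" "h > 0"
  obtains \<xi> where "0 < \<xi>" "\<xi> < h" "window_diff \<phi> x h = h * (ext01 \<phi> (x + \<xi>) - ext01 \<phi> \<xi>)"
proof -
  have "\<exists>\<xi>. 0 < \<xi> \<and> \<xi> < h \<and> window_diff \<phi> x h - window_diff \<phi> x 0 = (h - 0) * (ext01 \<phi> (x + \<xi>) - ext01 \<phi> \<xi>)"
    by (rule MVT2[OF assms(2)]) (rule window_diff_deriv_h, use assms in auto)
  then show ?thesis using that by (auto simp: window_diff_def)
qed

lemma window_diff_1_bounds:
  assumes "0 < h"
  shows "h / K \<le> window_diff \<phi> 1 h \<and> window_diff \<phi> 1 h \<le> K * h"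
proof -
  obtain \<xi> where "window_diff \<phi> 1 h = h * (ext01 \<phi> (1 + \<xi>) - ext01 \<phi> \<xi>)"
    using window_diff_mvt[of 1 h] assms by auto
  moreover have "1 / K \<le> ext01 \<phi> (1 + \<xi>) - ext01 \<phi> \<xi>" "ext01 \<phi> (1 + \<xi>) - ext01 \<phi> \<xi> \<le> K"
    using ext01_bilip[of \<xi> "1 + \<xi>"] by auto
  ultimately show ?thesis using assms
    by (auto simp: divide_le_eq mult.commute[of h] intro: mult_right_mono)
qed

lemma window_diff_1_pos: "0 < h \<Longrightarrow> 0 < window_diff \<phi> 1 h"
  using window_diff_1_bounds[of h] K_pos by (smt (verit) divide_pos_pos)

lemma smoothing_0: "h \<ge> 0 \<Longrightarrow> smoothing \<phi> 0 h = 0"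
  by (simp add: smoothing_def window_diff_def at_0)

lemma smoothing_1: "h \<ge> 0 \<Longrightarrow> smoothing \<phi> 1 h = 1"
  using window_diff_1_pos[of h] by (cases "h = 0") (simp_all add: smoothing_def at_1)

lemma inverse_le_K:
  assumes "1 / K \<le> v"
  shows "0 < v" "1 / v \<le> K"
proof -
  show v: "0 < v" using assms K_pos by (smt (verit) divide_pos_pos)
  have "1 / v \<le> 1 / (1 / K)" using assms K_pos v by (intro divide_left_mono) auto
  then show "1 / v \<le> K" by simp
qed

text \<open>Both bounds compare the mean-value representations of \<open>window_diff \<phi> x h\<close> and
  \<open>window_diff \<phi> 1 h\<close> with the values of \<open>ext01 \<phi>\<close> at the ends of the window.\<close>

lemma smoothing_close:
  assumes x: "0 \<le> x" "x \<le> 1" and h: "0 \<le> h" "h \<le> 1"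
  shows "\<bar>smoothing \<phi> x h - \<phi> x\<bar> \<le> 4 * K^2 * h"
proof (cases "h = 0")
  case True then show ?thesis by (simp add: smoothing_def)
next
  case False
  then have hp: "h > 0" using h by simp
  obtain \<xi> where xi: "0 < \<xi>" "\<xi> < h" "window_diff \<phi> x h = h * (ext01 \<phi> (x + \<xi>) - ext01 \<phi> \<xi>)"
    using window_diff_mvt[of x h] hp x by auto
  obtain \<eta> where eta: "0 < \<eta>" "\<eta> < h" "window_diff \<phi> 1 h = h * (ext01 \<phi> (1 + \<eta>) - ext01 \<phi> \<eta>)"
    using window_diff_mvt[of 1 h] hp by auto
  define u where "u = ext01 \<phi> (x + \<xi>) - ext01 \<phi> \<xi>"
  define v where "v = ext01 \<phi> (1 + \<eta>) - ext01 \<phi> \<eta>"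
  have v1: "1 / K \<le> v" using ext01_bilip[of \<eta> "1 + \<eta>"] by (simp add: v_def)
  have vpos: "v > 0" using inverse_le_K(1)[OF v1] .
  have "smoothing \<phi> x h = u / v" using False xi eta hp by (simp add: smoothing_def u_def v_def)
  then have eq: "smoothing \<phi> x h - \<phi> x = ((u - \<phi> x) - \<phi> x * (v - 1)) / v"
    using vpos by (simp add: field_simps)
  have "\<bar>u - \<phi> x\<bar> \<le> 2 * K * h"
    using ext01_lipschitz_within[of "x + \<xi>" x h] ext01_lipschitz_within[of \<xi> 0 h] xi
    by (simp add: u_def ext01_eq[OF x] ext01_0 abs_le_iff)
  moreover have "\<bar>v - 1\<bar> \<le> 2 * K * h"
    using ext01_lipschitz_within[of "1 + \<eta>" 1 h] ext01_lipschitz_within[of \<eta> 0 h] eta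
    by (simp add: v_def ext01_0 ext01_1 abs_le_iff)
  moreover have "\<bar>\<phi> x * (v - 1)\<bar> \<le> \<bar>v - 1\<bar>"
    using range01[OF x] by (simp add: abs_mult mult_left_le_one_le)
  ultimately have num: "\<bar>(u - \<phi> x) - \<phi> x * (v - 1)\<bar> \<le> 4 * K * h" by linarith
  have "\<bar>smoothing \<phi> x h - \<phi> x\<bar> = \<bar>(u - \<phi> x) - \<phi> x * (v - 1)\<bar> * (1 / v)"
    using vpos by (simp add: eq abs_mult)
  also have "\<dots> \<le> (4 * K * h) * K"
    by (rule mult_mono) (use num inverse_le_K(2)[OF v1] vpos in auto)
  finally show ?thesis by (simp add: power2_eq_square algebra_simps)
qed

lemma smoothing_deriv_x:
  assumes "h > 0" "x > -1"
  shows "((\<lambda>x. smoothing \<phi> x h) has_real_derivative smoothing_dx \<phi> x h) (at x)"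
proof -
  have "((\<lambda>x. window_diff \<phi> x h / window_diff \<phi> 1 h) has_real_derivative smoothing_dx \<phi> x h) (at x)"
    unfolding smoothing_dx_def by (rule DERIV_cdivide, rule window_diff_deriv_x) (use assms in auto)
  moreover have "(\<lambda>x. smoothing \<phi> x h) = (\<lambda>x. window_diff \<phi> x h / window_diff \<phi> 1 h)"
    using assms by (auto simp: smoothing_def)
  ultimately show ?thesis by simp
qed

lemma smoothing_dx_bounds:
  assumes "h > 0"
  shows "1 / K^2 \<le> smoothing_dx \<phi> x h \<and> smoothing_dx \<phi> x h \<le> K^2"
proof -
  have n: "h / K \<le> ext01 \<phi> (x + h) - ext01 \<phi> x" "ext01 \<phi> (x + h) - ext01 \<phi> x \<le> K * h"
    using ext01_bilip[of x "x + h"] assms by auto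
  have d: "h / K \<le> window_diff \<phi> 1 h" "window_diff \<phi> 1 h \<le> K * h"
    using window_diff_1_bounds[OF assms] by auto
  have hK: "0 < h / K" using assms K_pos by simp
  have "1 / K^2 = (h / K) / (K * h)" using assms K_pos by (simp add: power2_eq_square)
  also have "\<dots> \<le> smoothing_dx \<phi> x h"
    unfolding smoothing_dx_def by (rule frac_le) (use n d hK in linarith)+
  finally have lo: "1 / K^2 \<le> smoothing_dx \<phi> x h" .
  have "smoothing_dx \<phi> x h \<le> (K * h) / (h / K)"
    unfolding smoothing_dx_def by (rule frac_le) (use n d hK in linarith)+
  also have "\<dots> = K^2" using assms K_pos by (simp add: power2_eq_square)
  finally show ?thesis using lo by simp
qed

lemma smoothing_deriv_h:
  assumes "h > 0" "x > -1"
  shows "((\<lambda>h. smoothing \<phi> x h) has_real_derivative smoothing_dh \<phi> x h) (at h)"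
proof -
  have n1: "((\<lambda>h. window_diff \<phi> x h) has_real_derivative ext01 \<phi> (x + h) - ext01 \<phi> h) (at h)"
    by (rule window_diff_deriv_h) (use assms in auto)
  have n2: "((\<lambda>h. window_diff \<phi> 1 h) has_real_derivative ext01 \<phi> (1 + h) - ext01 \<phi> h) (at h)"
    by (rule window_diff_deriv_h) (use assms in auto)
  have "((\<lambda>h. window_diff \<phi> x h / window_diff \<phi> 1 h) has_real_derivative smoothing_dh \<phi> x h) (at h)"
    using DERIV_divide[OF n1 n2] window_diff_1_pos[OF assms(1)]
    unfolding smoothing_dh_def by (simp add: power2_eq_square)
  then show ?thesis
    by (rule has_field_derivative_transform_within_open[where S="{0<..}"])
      (use assms in \<open>auto simp: smoothing_def\<close>)
qed

lemma smoothing_dh_bound: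
  assumes x: "0 \<le> x" "x \<le> 1" and h: "0 < h" "h \<le> 1"
  shows "\<bar>smoothing_dh \<phi> x h\<bar> \<le> 4 * K^4"
proof -
  obtain \<xi> where xi: "0 < \<xi>" "\<xi> < h" "window_diff \<phi> x h = h * (ext01 \<phi> (x + \<xi>) - ext01 \<phi> \<xi>)"
    using window_diff_mvt[of x h] h x by auto
  obtain \<eta> where eta: "0 < \<eta>" "\<eta> < h" "window_diff \<phi> 1 h = h * (ext01 \<phi> (1 + \<eta>) - ext01 \<phi> \<eta>)"
    using window_diff_mvt[of 1 h] h by auto
  define uh where "uh = ext01 \<phi> (x + h) - ext01 \<phi> h"
  define vh where "vh = ext01 \<phi> (1 + h) - ext01 \<phi> h"
  define u where "u = ext01 \<phi> (x + \<xi>) - ext01 \<phi> \<xi>"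
  define v where "v = ext01 \<phi> (1 + \<eta>) - ext01 \<phi> \<eta>"
  have v1: "1 / K \<le> v" using ext01_bilip[of \<eta> "1 + \<eta>"] by (simp add: v_def)
  have vpos: "v > 0" using inverse_le_K(1)[OF v1] .
  have uh_b: "\<bar>uh\<bar> \<le> K" using ext01_lipschitz_within[of "x + h" h 1] x unfolding uh_def by simp
  have vh_b: "\<bar>vh\<bar> \<le> K" using ext01_lipschitz_within[of "1 + h" h 1] unfolding vh_def by simp
  have du: "\<bar>uh - u\<bar> \<le> 2 * K * h"
    using ext01_lipschitz_within[of "x + h" "x + \<xi>" h] ext01_lipschitz_within[of h \<xi> h] xi
    unfolding uh_def u_def by (simp add: abs_le_iff)
  have dv: "\<bar>v - vh\<bar> \<le> 2 * K * h"
    using ext01_lipschitz_within[of "1 + h" "1 + \<eta>" h] ext01_lipschitz_within[of h \<eta> h] eta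
    unfolding vh_def v_def by (simp add: abs_le_iff)
  have e1: "\<bar>uh * (v - vh)\<bar> \<le> K * (2 * K * h)"
    unfolding abs_mult by (rule mult_mono) (use uh_b dv K_pos in auto)
  have e2: "\<bar>vh * (uh - u)\<bar> \<le> K * (2 * K * h)"
    unfolding abs_mult by (rule mult_mono) (use vh_b du K_pos in auto)
  have "uh * v - u * vh = uh * (v - vh) + vh * (uh - u)" by (simp add: algebra_simps)
  then have "\<bar>uh * v - u * vh\<bar> \<le> \<bar>uh * (v - vh)\<bar> + \<bar>vh * (uh - u)\<bar>"
    by (metis abs_triangle_ineq)
  then have num: "\<bar>uh * v - u * vh\<bar> \<le> 4 * K^2 * h"
    using e1 e2 by (simp add: power2_eq_square)
  have "smoothing_dh \<phi> x h = (uh * (h * v) - (h * u) * vh) / (h * v)^2"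
    unfolding smoothing_dh_def uh_def vh_def u_def v_def xi(3) eta(3) by simp
  also have "\<dots> = (uh * v - u * vh) / h * (1 / v)^2"
    using h vpos by (simp add: field_simps power2_eq_square)
  finally have "\<bar>smoothing_dh \<phi> x h\<bar> = \<bar>uh * v - u * vh\<bar> / h * (1 / v)^2"
    using h by (simp add: abs_mult)
  also have "\<dots> \<le> (4 * K^2) * K^2"
  proof (rule mult_mono)
    show "\<bar>uh * v - u * vh\<bar> / h \<le> 4 * K^2" using num h by (simp add: divide_le_eq mult.commute)
    show "(1 / v)^2 \<le> K^2"
      using inverse_le_K(2)[OF v1] vpos by (intro power_mono) auto
  qed auto
  finally show ?thesis by (simp add: power2_eq_square power4_eq_xxxx algebra_simps)
qed

lemma smoothing_strict_mono:
  assumes "0 \<le> x" "x < x'" "x' \<le> 1" "h \<ge> 0"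
  shows "smoothing \<phi> x h < smoothing \<phi> x' h"
proof (cases "h = 0")
  case True
  have "0 < (x' - x) / K" using assms K_pos by simp
  also have "\<dots> \<le> \<phi> x' - \<phi> x" using bilip[of x x'] assms by simp
  finally show ?thesis using True by (simp add: smoothing_def)
next
  case False
  then have hp: "h > 0" using assms by simp
  have "window_diff \<phi> x h < window_diff \<phi> x' h"
  proof (rule DERIV_pos_imp_increasing[OF assms(2)])
    fix t assume t: "x \<le> t" "t \<le> x'"
    have "0 < h / K" using hp K_pos by simp
    also have "\<dots> \<le> ext01 \<phi> (t + h) - ext01 \<phi> t" using ext01_bilip[of t "t + h"] hp by simp
    finally show "\<exists>y. ((\<lambda>x. window_diff \<phi> x h) has_real_derivative y) (at t) \<and> 0 < y"
      using window_diff_deriv_x[of t h] t assms hp by auto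
  qed
  then show ?thesis using hp window_diff_1_pos[OF hp] by (simp add: smoothing_def divide_strict_right_mono)
qed

lemma smoothing_range:
  assumes "0 \<le> x" "x \<le> 1" "h \<ge> 0"
  shows "0 \<le> smoothing \<phi> x h \<and> smoothing \<phi> x h \<le> 1"
  using smoothing_strict_mono[of 0 x h] smoothing_strict_mono[of x 1 h] smoothing_0 smoothing_1 assms
  by (cases "x = 0"; cases "x = 1") auto

lemma prim_differentiable: "w > -2 \<Longrightarrow> prim \<phi> differentiable (at w)"
  using prim_deriv real_differentiable_def
  by (metis differentiableI has_field_derivative_imp_has_derivative)

end

lemma continuous_inj_on_01_strict_mono:
  fixes \<phi> :: "real \<Rightarrow> real"
  assumes cont: "continuous_on {0..1} \<phi>" and inj: "inj_on \<phi> {0..1}" and ends: "\<phi> 0 = 0" "\<phi> 1 = 1"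
    and st: "0 \<le> s" "s < t" "t \<le> 1"
  shows "\<phi> s < \<phi> t"
proof -
  have inner: "0 < \<phi> x \<and> \<phi> x < 1" if "0 < x" "x < 1" for x
    using continuous_inj_imp_mono[OF that cont inj] ends by auto
  show ?thesis
  proof (cases "s = 0")
    case True
    then show ?thesis using inner[of t] ends st by (cases "t = 1") auto
  next
    case False
    then have s: "0 < s" using st by simp
    have "(\<phi> 0 < \<phi> s \<and> \<phi> s < \<phi> t) \<or> (\<phi> t < \<phi> s \<and> \<phi> s < \<phi> 0)"
      by (rule continuous_inj_imp_mono[OF s st(2) continuous_on_subset[OF cont]
          inj_on_subset[OF inj]]) (use st(3) in auto)
    then show ?thesis using inner[of s] s st ends by auto
  qed
qed

lemma bilip01_if_scaled_bilip:
  fixes \<phi> :: "real \<Rightarrow> real"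
  assumes L: "L \<ge> 1" and \<alpha>: "\<alpha> > 0" and \<beta>: "\<beta> > 0" and ends: "\<phi> 0 = 0" "\<phi> 1 = 1"
    and H: "\<And>s t. 0 \<le> s \<Longrightarrow> s \<le> 1 \<Longrightarrow> 0 \<le> t \<Longrightarrow> t \<le> 1 \<Longrightarrow>
       \<alpha> * \<bar>s - t\<bar> / L \<le> \<beta> * \<bar>\<phi> s - \<phi> t\<bar> \<and> \<beta> * \<bar>\<phi> s - \<phi> t\<bar> \<le> L * \<alpha> * \<bar>s - t\<bar>"
  shows "bilip01 (L^2) \<phi>"
proof -
  have Lp: "L > 0" using L by simp
  have ratio: "\<alpha> / \<beta> \<le> L" "1 / L \<le> \<alpha> / \<beta>"
    using H[of 1 0] ends Lp \<beta> by (auto simp: field_simps)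
  have cont: "continuous_on {0..1} \<phi>"
  proof (rule lipschitz_on_continuous_on)
    show "lipschitz_on (L * \<alpha> / \<beta>) {0..1} \<phi>"
      using H \<beta> Lp \<alpha> by (intro lipschitz_onI) (auto simp: dist_real_def field_simps)
  qed
  have inj: "inj_on \<phi> {0..1}"
  proof (rule inj_onI)
    fix s t assume "s \<in> {0..1}" "t \<in> {0..1}" "\<phi> s = \<phi> t"
    then have "\<alpha> * \<bar>s - t\<bar> / L \<le> 0" using H[of s t] by auto
    then show "s = t" using \<alpha> Lp by (simp add: divide_le_0_iff zero_le_mult_iff mult_le_0_iff)
  qed
  note mono = continuous_inj_on_01_strict_mono[OF cont inj ends]
  have "(t - s) / L^2 \<le> \<phi> t - \<phi> s \<and> \<phi> t - \<phi> s \<le> L^2 * (t - s)" if "0 \<le> s" "s \<le> t" "t \<le> 1" for s t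
  proof (cases "s = t")
    case False
    then have "\<bar>\<phi> t - \<phi> s\<bar> = \<phi> t - \<phi> s" "\<bar>t - s\<bar> = t - s" using mono[of s t] that by auto
    then have H1: "\<alpha> * (t - s) / L \<le> \<beta> * (\<phi> t - \<phi> s)" "\<beta> * (\<phi> t - \<phi> s) \<le> L * \<alpha> * (t - s)"
      using H[of t s] that by auto
    have "(t - s) / L^2 = (1 / L) * (t - s) / L" by (simp add: power2_eq_square)
    also have "\<dots> \<le> (\<alpha> / \<beta>) * (t - s) / L"
      using ratio that Lp by (intro divide_right_mono mult_right_mono) auto
    also have "\<dots> = (\<alpha> * (t - s) / L) / \<beta>" by simp
    also have "\<dots> \<le> \<phi> t - \<phi> s"
      using H1(1) by (simp only: pos_divide_le_eq[OF \<beta>]) (simp add: mult.commute)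
    finally have lo: "(t - s) / L^2 \<le> \<phi> t - \<phi> s" .
    have "\<phi> t - \<phi> s \<le> L * (\<alpha> / \<beta>) * (t - s)" using H1(2) \<beta> by (simp add: field_simps)
    also have "\<dots> \<le> L * L * (t - s)" using ratio that Lp by (intro mult_right_mono mult_left_mono) auto
    finally show ?thesis using lo by (simp add: power2_eq_square)
  qed simp
  moreover have "L^2 \<ge> 1" using L by (simp add: one_le_power)
  ultimately show ?thesis by (unfold_locales) (use ends in auto)
qed

section \<open>Maps preserving the rows of the unit square\<close>

lemma continuous_within_by_bound:
  fixes F g :: "'a::metric_space \<Rightarrow> real"
  assumes "\<And>w. w \<in> S \<Longrightarrow> \<bar>F w - F z\<bar> \<le> g w" "continuous (at z within S) g" "g z = 0"
  shows "continuous (at z within S) F"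
proof -
  have g0: "(g \<longlongrightarrow> 0) (at z within S)" using assms(2,3) by (simp add: continuous_within)
  have "eventually (\<lambda>w. norm (F w - F z) \<le> g w) (at z within S)"
    unfolding eventually_at_filter using assms(1) by (auto intro: always_eventually)
  then have "((\<lambda>w. F w - F z) \<longlongrightarrow> 0) (at z within S)" by (rule Lim_null_comparison[OF _ g0])
  then show ?thesis by (simp add: continuous_within Lim_null[symmetric])
qed

lemma linear_real2_eq:
  assumes "linear (D :: real^2 \<Rightarrow> real)"
  shows "D v = D (pt 1 0) * v$1 + D (pt 0 1) * v$2"
proof -
  have "v = (v$1) *\<^sub>R pt 1 0 + (v$2) *\<^sub>R pt 0 1" by (simp add: vec2_eq_iff)
  then have "D v = D ((v$1) *\<^sub>R pt 1 0 + (v$2) *\<^sub>R pt 0 1)" by (rule arg_cong)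
  also have "\<dots> = (v$1) * D (pt 1 0) + (v$2) * D (pt 0 1)"
    by (simp only: linear_add[OF assms] linear_scale[OF assms]) simp
  finally show ?thesis by simp
qed

lemma has_derivative_partial_x:
  assumes "((F :: real^2 \<Rightarrow> real) has_derivative D) (at (pt x y))"
  shows "((\<lambda>t. F (pt t y)) has_real_derivative D (pt 1 0)) (at x)"
proof -
  have "((\<lambda>t. t *\<^sub>R pt 1 0 + pt 0 y) has_derivative (\<lambda>s. s *\<^sub>R pt 1 0 + 0)) (at x)"
    by (intro derivative_intros)
  then have "((\<lambda>t. pt t y) has_derivative (\<lambda>s. pt s 0)) (at x)" by simp
  from has_derivative_compose[OF this assms]
  have "((\<lambda>t. F (pt t y)) has_derivative (\<lambda>s. D (pt s 0))) (at x)" by (simp add: o_def)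
  moreover have "(\<lambda>s. D (pt s 0)) = (*) (D (pt 1 0))"
  proof
    fix s
    have "D (pt s 0) = D (pt 1 0) * s + D (pt 0 1) * 0"
      using linear_real2_eq[OF has_derivative_linear[OF assms], of "pt s 0"] by simp
    then show "D (pt s 0) = D (pt 1 0) * s" by simp
  qed
  ultimately show ?thesis by (simp add: has_field_derivative_def del: pt_arith)
qed

lemma has_derivative_partial_y:
  assumes "((F :: real^2 \<Rightarrow> real) has_derivative D) (at (pt x y))"
  shows "((\<lambda>t. F (pt x t)) has_real_derivative D (pt 0 1)) (at y)"
proof -
  have "((\<lambda>t. t *\<^sub>R pt 0 1 + pt x 0) has_derivative (\<lambda>s. s *\<^sub>R pt 0 1 + 0)) (at y)"
    by (intro derivative_intros)
  then have "((\<lambda>t. pt x t) has_derivative (\<lambda>s. pt 0 s)) (at y)" by simp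
  from has_derivative_compose[OF this assms]
  have "((\<lambda>t. F (pt x t)) has_derivative (\<lambda>s. D (pt 0 s))) (at y)" by (simp add: o_def)
  moreover have "(\<lambda>s. D (pt 0 s)) = (*) (D (pt 0 1))"
  proof
    fix s
    have "D (pt 0 s) = D (pt 1 0) * 0 + D (pt 0 1) * s"
      using linear_real2_eq[OF has_derivative_linear[OF assms], of "pt 0 s"] by simp
    then show "D (pt 0 s) = D (pt 0 1) * s" by simp
  qed
  ultimately show ?thesis by (simp add: has_field_derivative_def del: pt_arith)
qed

lemma has_derivative_pt:
  assumes "(f has_derivative f') (at z)" "(g has_derivative g') (at z)"
  shows "((\<lambda>z. pt (f z) (g z)) has_derivative (\<lambda>v. pt (f' v) (g' v))) (at z)"
proof -
  have "((\<lambda>z. f z *\<^sub>R pt 1 0 + g z *\<^sub>R pt 0 1) has_derivative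
      (\<lambda>v. f' v *\<^sub>R pt 1 0 + g' v *\<^sub>R pt 0 1)) (at z)"
    by (rule has_derivative_add[OF has_derivative_scaleR_left[OF assms(1)]
          has_derivative_scaleR_left[OF assms(2)]])
  then show ?thesis by (simp only: pt_as_sum[symmetric])
qed

definition mat2 :: "real \<Rightarrow> real \<Rightarrow> real \<Rightarrow> real \<Rightarrow> real^2 \<Rightarrow> real^2" where
  "mat2 p q r s = (\<lambda>v. pt (p * v$1 + q * v$2) (r * v$1 + s * v$2))"

lemma mat2_mat2:
  "mat2 p q r s (mat2 p' q' r' s' v) =
   mat2 (p * p' + q * r') (p * q' + q * s') (r * p' + s * r') (r * q' + s * s') v"
  by (simp add: mat2_def algebra_simps)

lemma linear_mat2: "linear (mat2 p q r s)"
  by (rule linearI) (simp_all add: mat2_def algebra_simps)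

lemma bounded_linear_mat2: "bounded_linear (mat2 p q r s)"
  using linear_mat2 linear_conv_bounded_linear by blast

lemma det_matrix_mat2: "det (matrix (mat2 p q r s)) = p * s - q * r"
proof -
  have "axis 1 (1::real) = pt 1 0" "axis 2 (1::real) = pt 0 1"
    by (simp_all add: vec2_eq_iff axis_def)
  then show ?thesis by (simp add: det_2 matrix_def mat2_def)
qed

lemma onorm_mat2_le: "onorm (mat2 p q r s) \<le> \<bar>p\<bar> + \<bar>q\<bar> + \<bar>r\<bar> + \<bar>s\<bar>"
proof (rule onorm_le)
  fix v :: "real^2"
  have n: "\<bar>v$1\<bar> \<le> norm v" "\<bar>v$2\<bar> \<le> norm v" by (rule component_le_norm_cart)+
  have "norm (mat2 p q r s v) \<le> \<bar>p * v$1 + q * v$2\<bar> + \<bar>r * v$1 + s * v$2\<bar>"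
    unfolding mat2_def norm_pt by (rule sqrt_sum_squares_le_sum_abs)
  also have "\<dots> \<le> (\<bar>p\<bar> * \<bar>v$1\<bar> + \<bar>q\<bar> * \<bar>v$2\<bar>) + (\<bar>r\<bar> * \<bar>v$1\<bar> + \<bar>s\<bar> * \<bar>v$2\<bar>)"
    by (intro add_mono) (simp_all add: abs_mult[symmetric] abs_triangle_ineq)
  also have "\<dots> \<le> (\<bar>p\<bar> * norm v + \<bar>q\<bar> * norm v) + (\<bar>r\<bar> * norm v + \<bar>s\<bar> * norm v)"
    by (intro add_mono mult_left_mono n) auto
  finally show "norm (mat2 p q r s v) \<le> (\<bar>p\<bar> + \<bar>q\<bar> + \<bar>r\<bar> + \<bar>s\<bar>) * norm v"
    by (simp add: algebra_simps)
qed

definition bump :: "real \<Rightarrow> real" where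
  "bump y = y * (1 - y)"

lemma bump_pos: "0 < y \<Longrightarrow> y < 1 \<Longrightarrow> 0 < bump y"
  by (simp add: bump_def)

lemma bump_deriv: "(bump has_real_derivative (1 - 2 * y)) (at y)"
  unfolding bump_def by (auto intro!: derivative_eq_intros)

lemma bump_bounds:
  assumes "0 \<le> y" "y \<le> 1"
  shows "0 \<le> bump y" "bump y \<le> 1" "bump y \<le> y" "bump y \<le> 1 - y"
  using mult_left_mono[of "1 - y" 1 y] mult_right_mono[of y 1 "1 - y"] assms
  by (simp_all add: bump_def)

text \<open>Row \<open>y\<close> of the square is mapped onto itself by an interpolation, linear in \<open>y\<close>, of
  \<open>\<phi>\<^sub>0\<close> and \<open>\<phi>\<^sub>1\<close> smoothed at scale \<open>bump y\<close>.  The scale vanishes on the bottom and top edges,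
  where the map is \<open>\<phi>\<^sub>0\<close> resp.\ \<open>\<phi>\<^sub>1\<close>; the vertical edges are fixed pointwise.\<close>

definition row_map_x :: "(real \<Rightarrow> real) \<Rightarrow> (real \<Rightarrow> real) \<Rightarrow> real^2 \<Rightarrow> real" where
  "row_map_x \<phi>0 \<phi>1 z =
     (1 - z$2) * smoothing \<phi>0 (z$1) (bump (z$2)) + z$2 * smoothing \<phi>1 (z$1) (bump (z$2))"

definition row_map :: "(real \<Rightarrow> real) \<Rightarrow> (real \<Rightarrow> real) \<Rightarrow> real^2 \<Rightarrow> real^2" where
  "row_map \<phi>0 \<phi>1 z = pt (row_map_x \<phi>0 \<phi>1 z) (z$2)"

locale bilip01_pair = bot: bilip01 K \<phi>0 + top: bilip01 K \<phi>1 for K \<phi>0 \<phi>1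
begin

lemma row_map_x_left: "0 \<le> y \<Longrightarrow> y \<le> 1 \<Longrightarrow> row_map_x \<phi>0 \<phi>1 (pt 0 y) = 0"
  using bot.smoothing_0 top.smoothing_0 bump_bounds[of y] by (simp add: row_map_x_def)

lemma row_map_x_right: "0 \<le> y \<Longrightarrow> y \<le> 1 \<Longrightarrow> row_map_x \<phi>0 \<phi>1 (pt 1 y) = 1"
  using bot.smoothing_1 top.smoothing_1 bump_bounds[of y] by (simp add: row_map_x_def algebra_simps)

lemma row_map_x_bottom: "row_map_x \<phi>0 \<phi>1 (pt x 0) = \<phi>0 x"
  by (simp add: row_map_x_def bump_def smoothing_def)

lemma row_map_x_top: "row_map_x \<phi>0 \<phi>1 (pt x 1) = \<phi>1 x"
  by (simp add: row_map_x_def bump_def smoothing_def)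

lemma row_map_x_strict_mono:
  assumes "0 \<le> y" "y \<le> 1" "0 \<le> x" "x < x'" "x' \<le> 1"
  shows "row_map_x \<phi>0 \<phi>1 (pt x y) < row_map_x \<phi>0 \<phi>1 (pt x' y)"
proof -
  have h: "bump y \<ge> 0" using bump_bounds assms by auto
  have b: "smoothing \<phi>0 x (bump y) < smoothing \<phi>0 x' (bump y)"
    by (rule bot.smoothing_strict_mono) (use assms h in auto)
  have t: "smoothing \<phi>1 x (bump y) < smoothing \<phi>1 x' (bump y)"
    by (rule top.smoothing_strict_mono) (use assms h in auto)
  show ?thesis
  proof (cases "y = 0")
    case True then show ?thesis using b by (simp add: row_map_x_def)
  next
    case False
    then have "y * smoothing \<phi>1 x (bump y) < y * smoothing \<phi>1 x' (bump y)" using t assms by simp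
    moreover have "(1 - y) * smoothing \<phi>0 x (bump y) \<le> (1 - y) * smoothing \<phi>0 x' (bump y)"
      using b assms by (intro mult_left_mono) auto
    ultimately show ?thesis by (simp add: row_map_x_def)
  qed
qed

lemma row_map_x_range:
  assumes "0 \<le> y" "y \<le> 1" "0 \<le> x" "x \<le> 1"
  shows "0 \<le> row_map_x \<phi>0 \<phi>1 (pt x y) \<and> row_map_x \<phi>0 \<phi>1 (pt x y) \<le> 1"
  using row_map_x_strict_mono[of y 0 x] row_map_x_strict_mono[of y x 1] row_map_x_left row_map_x_right assms
  by (cases "x = 0"; cases "x = 1") auto

lemma row_map_x_near_bottom:
  assumes "0 \<le> y" "y \<le> 1" "0 \<le> x" "x \<le> 1"
  shows "\<bar>row_map_x \<phi>0 \<phi>1 (pt x y) - \<phi>0 x\<bar> \<le> (4 * K^2 + 2) * y"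
proof -
  have h: "0 \<le> bump y" "bump y \<le> 1" "bump y \<le> y" using bump_bounds assms(1,2) by auto
  have "4 * K^2 * bump y \<le> 4 * K^2 * y" by (rule mult_left_mono) (use h(3) in auto)
  then have c0: "\<bar>smoothing \<phi>0 x (bump y) - \<phi>0 x\<bar> \<le> 4 * K^2 * y"
    using bot.smoothing_close[OF assms(3,4) h(1,2)] by linarith
  have "\<bar>smoothing \<phi>1 x (bump y) - \<phi>0 x\<bar> \<le> 2"
    using top.smoothing_range[of x "bump y"] bot.range01[of x] assms h by (simp add: abs_le_iff)
  moreover have "row_map_x \<phi>0 \<phi>1 (pt x y) - \<phi>0 x =
      (1 - y) * (smoothing \<phi>0 x (bump y) - \<phi>0 x) + y * (smoothing \<phi>1 x (bump y) - \<phi>0 x)"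
    by (simp add: row_map_x_def algebra_simps)
  ultimately have "\<bar>row_map_x \<phi>0 \<phi>1 (pt x y) - \<phi>0 x\<bar> \<le>
      (1 - y) * \<bar>smoothing \<phi>0 x (bump y) - \<phi>0 x\<bar> + y * \<bar>smoothing \<phi>1 x (bump y) - \<phi>0 x\<bar>"
    using assms abs_triangle_ineq[of "(1 - y) * _" "y * _"] by (simp add: abs_mult)
  also have "\<dots> \<le> 1 * (4 * K^2 * y) + y * 2"
    by (intro add_mono mult_mono) (use assms c0 \<open>\<bar>smoothing \<phi>1 x (bump y) - \<phi>0 x\<bar> \<le> 2\<close> in auto)
  finally show ?thesis by (simp add: algebra_simps)
qed

lemma row_map_x_near_top:
  assumes "0 \<le> y" "y \<le> 1" "0 \<le> x" "x \<le> 1"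
  shows "\<bar>row_map_x \<phi>0 \<phi>1 (pt x y) - \<phi>1 x\<bar> \<le> (4 * K^2 + 2) * (1 - y)"
proof -
  have h: "0 \<le> bump y" "bump y \<le> 1" "bump y \<le> 1 - y" using bump_bounds assms(1,2) by auto
  have "4 * K^2 * bump y \<le> 4 * K^2 * (1 - y)" by (rule mult_left_mono) (use h(3) in auto)
  then have c1: "\<bar>smoothing \<phi>1 x (bump y) - \<phi>1 x\<bar> \<le> 4 * K^2 * (1 - y)"
    using top.smoothing_close[OF assms(3,4) h(1,2)] by linarith
  have "\<bar>smoothing \<phi>0 x (bump y) - \<phi>1 x\<bar> \<le> 2"
    using bot.smoothing_range[of x "bump y"] top.range01[of x] assms h by (simp add: abs_le_iff)
  moreover have "row_map_x \<phi>0 \<phi>1 (pt x y) - \<phi>1 x =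
      (1 - y) * (smoothing \<phi>0 x (bump y) - \<phi>1 x) + y * (smoothing \<phi>1 x (bump y) - \<phi>1 x)"
    by (simp add: row_map_x_def algebra_simps)
  ultimately have "\<bar>row_map_x \<phi>0 \<phi>1 (pt x y) - \<phi>1 x\<bar> \<le>
      (1 - y) * \<bar>smoothing \<phi>0 x (bump y) - \<phi>1 x\<bar> + y * \<bar>smoothing \<phi>1 x (bump y) - \<phi>1 x\<bar>"
    using assms abs_triangle_ineq[of "(1 - y) * _" "y * _"] by (simp add: abs_mult)
  also have "\<dots> \<le> (1 - y) * 2 + 1 * (4 * K^2 * (1 - y))"
    by (intro add_mono mult_mono) (use assms c1 \<open>\<bar>smoothing \<phi>0 x (bump y) - \<phi>1 x\<bar> \<le> 2\<close> in auto)
  finally show ?thesis by (simp add: algebra_simps)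
qed

lemma row_map_x_differentiable:
  fixes z :: "real^2"
  assumes z: "z$1 > -1" "0 < z$2" "z$2 < 1"
  shows "row_map_x \<phi>0 \<phi>1 differentiable (at z)"
proof -
  define Q where "Q = (\<lambda>z::real^2.
    (1 - z$2) * (window_diff \<phi>0 (z$1) (bump (z$2)) / window_diff \<phi>0 1 (bump (z$2)))
    + z$2 * (window_diff \<phi>1 (z$1) (bump (z$2)) / window_diff \<phi>1 1 (bump (z$2))))"
  have coord: "(\<lambda>z::real^2. z$i) differentiable (at z)" for i
    by (rule bounded_linear_imp_differentiable[OF bounded_linear_vec_nth])
  have hd: "(\<lambda>z::real^2. bump (z$2)) differentiable (at z)"
    unfolding bump_def by (intro differentiable_mult differentiable_diff coord differentiable_const)
  have hz: "0 < bump (z$2)" using bump_pos z by auto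
  have window_diff_differentiable:
    "(\<lambda>z. window_diff \<psi> (g z) (bump (z$2))) differentiable (at z)"
    if "bilip01 K \<psi>" "g differentiable (at z)" "g z > -1" for \<psi> and g :: "real^2 \<Rightarrow> real"
  proof -
    have prim_comp: "(\<lambda>z. prim \<psi> (f z)) differentiable (at z)"
      if "f differentiable (at z)" "f z > -2" for f :: "real^2 \<Rightarrow> real"
      using differentiable_compose[OF bilip01.prim_differentiable[OF \<open>bilip01 K \<psi>\<close>] that(1)] that(2)
      by blast
    show ?thesis
      unfolding window_diff_def
      by (intro differentiable_add differentiable_diff prim_comp that(2) hd differentiable_const)
        (use that hz in auto)
  qed
  have "Q differentiable (at z)"
    unfolding Q_def
    by (intro differentiable_add differentiable_mult differentiable_diff differentiable_divide
        differentiable_const coord window_diff_differentiable bot.bilip01_axioms top.bilip01_axioms)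
      (use z bot.window_diff_1_pos[OF hz] top.window_diff_1_pos[OF hz] in simp_all)
  then obtain D where D: "(Q has_derivative D) (at z)" by (auto simp: differentiable_def)
  have "(row_map_x \<phi>0 \<phi>1 has_derivative D) (at z)"
  proof (rule has_derivative_transform_within_open[OF D, of "{w. 0 < w$2 \<and> w$2 < 1}"])
    show "open {w::real^2. 0 < w$2 \<and> w$2 < 1}"
      by (intro open_Collect_conj open_Collect_less continuous_intros)
    show "Q w = row_map_x \<phi>0 \<phi>1 w" if "w \<in> {w. 0 < w$2 \<and> w$2 < 1}" for w :: "real^2"
      using bump_pos[of "w$2"] that by (simp add: Q_def row_map_x_def smoothing_def)
  qed (use z in auto)
  then show ?thesis by (auto simp: differentiable_def)
qed

lemma continuous_on_row_map_x: "continuous_on (rect 1 1) (row_map_x \<phi>0 \<phi>1)"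
  unfolding continuous_on_eq_continuous_within
proof
  fix z :: "real^2" assume z: "z \<in> rect 1 1"
  then have zr: "0 \<le> z$1" "z$1 \<le> 1" "0 \<le> z$2" "z$2 \<le> 1" by (auto simp: mem_rect)
  have wr: "0 \<le> w$1" "w$1 \<le> 1" "0 \<le> w$2" "w$2 \<le> 1" if "w \<in> rect 1 1" for w
    using that by (auto simp: mem_rect)
  consider "0 < z$2 \<and> z$2 < 1" | "z$2 = 0" | "z$2 = 1" using zr by linarith
  then show "continuous (at z within rect 1 1) (row_map_x \<phi>0 \<phi>1)"
  proof cases
    case 1
    have "row_map_x \<phi>0 \<phi>1 differentiable (at z)"
      by (rule row_map_x_differentiable) (use 1 zr in auto)
    then show ?thesis by (meson differentiable_at_withinI differentiable_imp_continuous_within)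
  next
    case 2
    then have "z = pt (z$1) 0" by (simp add: vec2_eq_iff)
    then have "row_map_x \<phi>0 \<phi>1 z = \<phi>0 (z$1)" by (metis row_map_x_bottom)
    show ?thesis
    proof (rule continuous_within_by_bound)
      fix w assume "w \<in> rect 1 1"
      note w = wr[OF this]
      show "\<bar>row_map_x \<phi>0 \<phi>1 w - row_map_x \<phi>0 \<phi>1 z\<bar> \<le> (4*K^2+2) * w$2 + K * \<bar>w$1 - z$1\<bar>"
        using row_map_x_near_bottom[OF w(3,4,1,2)] bot.lipschitz[OF zr(1,2) w(1,2)] zr w
          \<open>row_map_x \<phi>0 \<phi>1 z = \<phi>0 (z$1)\<close> by (simp add: pt_eta)
    qed (use 2 in \<open>auto intro!: continuous_intros\<close>)
  next
    case 3
    then have "z = pt (z$1) 1" by (simp add: vec2_eq_iff)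
    then have "row_map_x \<phi>0 \<phi>1 z = \<phi>1 (z$1)" by (metis row_map_x_top)
    show ?thesis
    proof (rule continuous_within_by_bound)
      fix w assume "w \<in> rect 1 1"
      note w = wr[OF this]
      show "\<bar>row_map_x \<phi>0 \<phi>1 w - row_map_x \<phi>0 \<phi>1 z\<bar> \<le> (4*K^2+2) * (1 - w$2) + K * \<bar>w$1 - z$1\<bar>"
        using row_map_x_near_top[OF w(3,4,1,2)] top.lipschitz[OF zr(1,2) w(1,2)] zr w
          \<open>row_map_x \<phi>0 \<phi>1 z = \<phi>1 (z$1)\<close> by (simp add: pt_eta)
    qed (use 3 in \<open>auto intro!: continuous_intros\<close>)
  qed
qed

text \<open>The \<open>x\<close>-derivative is a convex combination of \<open>smoothing_dx\<close>, hence in \<open>[1/K\<^sup>2, K\<^sup>2]\<close>;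
  the \<open>y\<close>-derivative is bounded because \<open>\<bar>bump' y\<bar> \<le> 1\<close> and \<open>smoothing_dh\<close> is bounded.\<close>

lemma row_map_x_partials:
  assumes "0 < x" "x < 1" "0 < y" "y < 1"
  obtains D where "(row_map_x \<phi>0 \<phi>1 has_derivative D) (at (pt x y))"
    "1 / K^2 \<le> D (pt 1 0)" "D (pt 1 0) \<le> K^2" "\<bar>D (pt 0 1)\<bar> \<le> 6 * K^4"
proof -
  obtain D where D: "(row_map_x \<phi>0 \<phi>1 has_derivative D) (at (pt x y))"
    using row_map_x_differentiable[of "pt x y"] assms by (auto simp: differentiable_def)
  define h where "h = bump y"
  have hp: "0 < h" "h \<le> 1" using bump_pos[of y] bump_bounds[of y] assms by (auto simp: h_def)
  have "((\<lambda>t. (1 - y) * smoothing \<phi>0 t h + y * smoothing \<phi>1 t h) has_real_derivative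
      (1 - y) * smoothing_dx \<phi>0 x h + y * smoothing_dx \<phi>1 x h) (at x)"
    by (intro DERIV_add DERIV_cmult bot.smoothing_deriv_x top.smoothing_deriv_x) (use hp assms in auto)
  then have dx: "D (pt 1 0) = (1 - y) * smoothing_dx \<phi>0 x h + y * smoothing_dx \<phi>1 x h"
    using has_derivative_partial_x[OF D] by (simp add: row_map_x_def h_def DERIV_unique)
  have "1 / K^2 = (1 - y) * (1 / K^2) + y * (1 / K^2)"
    by (simp add: add_divide_distrib[symmetric])
  moreover have "K^2 = (1 - y) * K^2 + y * K^2" by (simp add: algebra_simps)
  ultimately have dx_bounds: "1 / K^2 \<le> D (pt 1 0)" "D (pt 1 0) \<le> K^2"
    unfolding dx using bot.smoothing_dx_bounds[OF hp(1), of x] top.smoothing_dx_bounds[OF hp(1), of x] assms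
    by (smt (verit) mult_left_mono)+
  have c0: "((\<lambda>t. smoothing \<phi>0 x (bump t)) has_real_derivative smoothing_dh \<phi>0 x h * (1 - 2 * y)) (at y)"
    unfolding h_def by (rule DERIV_chain2[OF bot.smoothing_deriv_h bump_deriv]) (use hp assms in \<open>auto simp: h_def\<close>)
  have c1: "((\<lambda>t. smoothing \<phi>1 x (bump t)) has_real_derivative smoothing_dh \<phi>1 x h * (1 - 2 * y)) (at y)"
    unfolding h_def by (rule DERIV_chain2[OF top.smoothing_deriv_h bump_deriv]) (use hp assms in \<open>auto simp: h_def\<close>)
  have "((\<lambda>t. (1 - t) * smoothing \<phi>0 x (bump t) + t * smoothing \<phi>1 x (bump t)) has_real_derivative
      ((1 - y) * (smoothing_dh \<phi>0 x h * (1 - 2 * y)) + (0 - 1) * smoothing \<phi>0 x h) +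
      (y * (smoothing_dh \<phi>1 x h * (1 - 2 * y)) + 1 * smoothing \<phi>1 x h)) (at y)"
    unfolding h_def by (intro DERIV_add DERIV_mult' DERIV_diff DERIV_const DERIV_ident c0[unfolded h_def] c1[unfolded h_def])
  then have dy: "D (pt 0 1) = (1 - y) * (smoothing_dh \<phi>0 x h * (1 - 2 * y)) - smoothing \<phi>0 x h
      + (y * (smoothing_dh \<phi>1 x h * (1 - 2 * y)) + smoothing \<phi>1 x h)"
    using has_derivative_partial_y[OF D] unfolding row_map_x_def by (simp add: h_def DERIV_unique)
  have r: "0 \<le> smoothing \<phi>0 x h \<and> smoothing \<phi>0 x h \<le> 1" "0 \<le> smoothing \<phi>1 x h \<and> smoothing \<phi>1 x h \<le> 1"
    using bot.smoothing_range top.smoothing_range assms hp by auto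
  have y2: "\<bar>1 - 2 * y\<bar> \<le> 1" using assms by auto
  have "\<bar>smoothing_dh \<phi>0 x h\<bar> \<le> 4 * K^4" "\<bar>smoothing_dh \<phi>1 x h\<bar> \<le> 4 * K^4"
    by (rule bot.smoothing_dh_bound top.smoothing_dh_bound; use assms hp in simp)+
  then have "\<bar>(1 - y) * (smoothing_dh \<phi>0 x h * (1 - 2 * y))\<bar> \<le> (1 - y) * (4 * K^4 * 1)"
    "\<bar>y * (smoothing_dh \<phi>1 x h * (1 - 2 * y))\<bar> \<le> y * (4 * K^4 * 1)"
    unfolding abs_mult using assms y2 by (intro mult_mono; simp)+
  moreover have "(1 - y) * (4 * K^4 * 1) + y * (4 * K^4 * 1) = 4 * K^4" by (simp add: algebra_simps)
  moreover have "4 * K^4 + 1 \<le> 6 * K^4" using one_le_power[OF bot.K_ge_1, of 4] by linarith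
  ultimately have "\<bar>D (pt 0 1)\<bar> \<le> 6 * K^4"
    unfolding dy using r by (simp only: abs_le_iff) linarith
  then show ?thesis using that D dx_bounds by blast
qed

lemma row_map_bottom: "row_map \<phi>0 \<phi>1 (pt x 0) = pt (\<phi>0 x) 0"
  by (simp add: row_map_def row_map_x_bottom)

lemma row_map_top: "row_map \<phi>0 \<phi>1 (pt x 1) = pt (\<phi>1 x) 1"
  by (simp add: row_map_def row_map_x_top)

lemma row_map_left: "0 \<le> y \<Longrightarrow> y \<le> 1 \<Longrightarrow> row_map \<phi>0 \<phi>1 (pt 0 y) = pt 0 y"
  by (simp add: row_map_def row_map_x_left)

lemma row_map_right: "0 \<le> y \<Longrightarrow> y \<le> 1 \<Longrightarrow> row_map \<phi>0 \<phi>1 (pt 1 y) = pt 1 y"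
  by (simp add: row_map_def row_map_x_right)

lemma continuous_on_row_map: "continuous_on (rect 1 1) (row_map \<phi>0 \<phi>1)"
proof -
  have "continuous_on (rect 1 1) (\<lambda>z. row_map_x \<phi>0 \<phi>1 z *\<^sub>R pt 1 0 + (z$2) *\<^sub>R pt 0 1)"
    by (intro continuous_on_add continuous_on_scaleR continuous_on_row_map_x continuous_on_const
        continuous_on_component continuous_on_id)
  moreover have "row_map \<phi>0 \<phi>1 = (\<lambda>z. row_map_x \<phi>0 \<phi>1 z *\<^sub>R pt 1 0 + (z$2) *\<^sub>R pt 0 1)"
    by (rule ext) (simp only: row_map_def pt_as_sum[symmetric])
  ultimately show ?thesis by simp
qed

lemma row_map_image: "row_map \<phi>0 \<phi>1 ` rect 1 1 = rect 1 1"
proof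
  show "row_map \<phi>0 \<phi>1 ` rect 1 1 \<subseteq> rect 1 1"
  proof
    fix w assume "w \<in> row_map \<phi>0 \<phi>1 ` rect 1 1"
    then obtain z where "z \<in> rect 1 1" "w = row_map \<phi>0 \<phi>1 z" by blast
    then show "w \<in> rect 1 1"
      using row_map_x_range[of "z$2" "z$1"] by (auto simp: row_map_def mem_rect pt_eta)
  qed
  show "rect 1 1 \<subseteq> row_map \<phi>0 \<phi>1 ` rect 1 1"
  proof
    fix w assume "w \<in> rect 1 1"
    then have wr: "0 \<le> w$1" "w$1 \<le> 1" "0 \<le> w$2" "w$2 \<le> 1" by (auto simp: mem_rect)
    have "continuous_on {0..1} (\<lambda>t. row_map_x \<phi>0 \<phi>1 (pt t (w$2)))"
    proof (rule continuous_on_compose2[OF continuous_on_row_map_x])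
      show "continuous_on {0..1} (\<lambda>t. pt t (w$2))" unfolding pt_as_sum[of _ "w$2"] by (intro continuous_intros)
    qed (use wr in \<open>auto simp: mem_rect\<close>)
    then obtain t where "0 \<le> t" "t \<le> 1" "row_map_x \<phi>0 \<phi>1 (pt t (w$2)) = w$1"
      using IVT'[of "\<lambda>t. row_map_x \<phi>0 \<phi>1 (pt t (w$2))" 0 "w$1" 1] row_map_x_left row_map_x_right wr by auto
    then show "w \<in> row_map \<phi>0 \<phi>1 ` rect 1 1"
      using wr by (intro image_eqI[of _ _ "pt t (w$2)"]) (auto simp: row_map_def mem_rect vec2_eq_iff)
  qed
qed

lemma inj_on_row_map: "inj_on (row_map \<phi>0 \<phi>1) (rect 1 1)"
proof (rule inj_onI)
  fix z w assume "z \<in> rect 1 1" "w \<in> rect 1 1" and e: "row_map \<phi>0 \<phi>1 z = row_map \<phi>0 \<phi>1 w"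
  then have r: "0 \<le> z$1" "z$1 \<le> 1" "0 \<le> z$2" "z$2 \<le> 1" "0 \<le> w$1" "w$1 \<le> 1"
    by (auto simp: mem_rect)
  have y: "z$2 = w$2" using e by (simp add: row_map_def)
  moreover have "row_map_x \<phi>0 \<phi>1 z = row_map_x \<phi>0 \<phi>1 w" using e by (simp add: row_map_def)
  ultimately have x: "row_map_x \<phi>0 \<phi>1 (pt (z$1) (z$2)) = row_map_x \<phi>0 \<phi>1 (pt (w$1) (z$2))"
    by (metis pt_eta)
  have "z$1 = w$1"
    using row_map_x_strict_mono[of "z$2" "z$1" "w$1"] row_map_x_strict_mono[of "z$2" "w$1" "z$1"] x r
    by (cases "z$1" "w$1" rule: linorder_cases) auto
  then show "z = w" using y by (simp add: vec2_eq_iff)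
qed

lemma row_map_interior:
  assumes "0 < z$1" "z$1 < 1" "0 < z$2" "z$2 < 1"
  shows "0 < row_map \<phi>0 \<phi>1 z $ 1 \<and> row_map \<phi>0 \<phi>1 z $ 1 < 1
    \<and> 0 < row_map \<phi>0 \<phi>1 z $ 2 \<and> row_map \<phi>0 \<phi>1 z $ 2 < 1"
  using row_map_x_strict_mono[of "z$2" 0 "z$1"] row_map_x_strict_mono[of "z$2" "z$1" 1]
    row_map_x_left[of "z$2"] row_map_x_right[of "z$2"] assms
  by (simp add: row_map_def pt_eta)

lemma row_map_deriv:
  assumes "0 < z$1" "z$1 < 1" "0 < z$2" "z$2 < 1"
  obtains a b where "(row_map \<phi>0 \<phi>1 has_derivative mat2 a b 0 1) (at z)"
    "1 / K^2 \<le> a" "a \<le> K^2" "\<bar>b\<bar> \<le> 6 * K^4"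
proof -
  obtain D where D: "(row_map_x \<phi>0 \<phi>1 has_derivative D) (at (pt (z$1) (z$2)))"
     "1 / K^2 \<le> D (pt 1 0)" "D (pt 1 0) \<le> K^2" "\<bar>D (pt 0 1)\<bar> \<le> 6 * K^4"
    using row_map_x_partials[OF assms] by blast
  have "((\<lambda>z::real^2. z$2) has_derivative (\<lambda>v. v$2)) (at z)"
    by (rule bounded_linear_imp_has_derivative[OF bounded_linear_vec_nth])
  moreover have "(row_map_x \<phi>0 \<phi>1 has_derivative D) (at z)" using D(1) by (simp only: pt_eta)
  ultimately have "(row_map \<phi>0 \<phi>1 has_derivative (\<lambda>v. pt (D v) (v$2))) (at z)"
    unfolding row_map_def by (intro has_derivative_pt)
  moreover have "(\<lambda>v. pt (D v) (v$2)) = mat2 (D (pt 1 0)) (D (pt 0 1)) 0 1"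
  proof
    fix v
    have "D v = D (pt 1 0) * v$1 + D (pt 0 1) * v$2"
      by (rule linear_real2_eq[OF has_derivative_linear[OF D(1)]])
    then show "pt (D v) (v$2) = mat2 (D (pt 1 0)) (D (pt 0 1)) 0 1 v" by (simp add: mat2_def)
  qed
  ultimately show ?thesis using that D(2-4) by metis
qed

end

section \<open>Extension of four edge maps to the unit square\<close>

definition swap_xy :: "real^2 \<Rightarrow> real^2" where
  "swap_xy z = pt (z$2) (z$1)"

lemma swap_xy_pt [simp]: "swap_xy (pt x y) = pt y x"
  by (simp add: swap_xy_def)

lemma swap_xy_swap_xy [simp]: "swap_xy (swap_xy z) = z"
  by (simp add: swap_xy_def vec2_eq_iff)

lemma swap_xy_mem_rect [simp]: "swap_xy z \<in> rect w w \<longleftrightarrow> z \<in> rect w w"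
  by (auto simp: swap_xy_def mem_rect)

lemma swap_xy_image: "swap_xy ` rect w w = rect w w"
  by (auto intro: image_eqI[of _ _ "swap_xy z" for z])

lemma swap_xy_eq_mat2: "swap_xy = mat2 0 1 1 0"
  by (simp add: fun_eq_iff swap_xy_def mat2_def)

lemma continuous_on_swap_xy: "continuous_on A swap_xy"
  unfolding swap_xy_eq_mat2 by (rule linear_continuous_on[OF bounded_linear_mat2])

lemma inj_swap_xy: "inj swap_xy"
  by (metis injI swap_xy_swap_xy)

lemma swap_xy_deriv: "(swap_xy has_derivative mat2 0 1 1 0) (at z)"
  unfolding swap_xy_eq_mat2 by (rule bounded_linear_imp_has_derivative[OF bounded_linear_mat2])

text \<open>The first row map realises \<open>\<phi>\<^sub>b\<close> and \<open>\<phi>\<^sub>t\<close> on the horizontal edges and fixes the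
  vertical ones; conjugated by the swap, the second realises \<open>\<psi>\<^sub>l\<close> and \<open>\<psi>\<^sub>r\<close> on the vertical
  edges and fixes the horizontal ones.\<close>

definition square_map ::
  "(real \<Rightarrow> real) \<Rightarrow> (real \<Rightarrow> real) \<Rightarrow> (real \<Rightarrow> real) \<Rightarrow> (real \<Rightarrow> real) \<Rightarrow> real^2 \<Rightarrow> real^2" where
  "square_map \<phi>b \<phi>t \<psi>l \<psi>r = swap_xy \<circ> row_map \<psi>l \<psi>r \<circ> swap_xy \<circ> row_map \<phi>b \<phi>t"

locale bilip01_quad = hor: bilip01_pair K \<phi>b \<phi>t + ver: bilip01_pair K \<psi>l \<psi>r for K \<phi>b \<phi>t \<psi>l \<psi>r
begin

lemma continuous_on_square_map: "continuous_on (rect 1 1) (square_map \<phi>b \<phi>t \<psi>l \<psi>r)"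
  unfolding square_map_def
  by (intro continuous_on_compose continuous_on_swap_xy hor.continuous_on_row_map)
    (simp_all add: image_comp[symmetric] hor.row_map_image ver.row_map_image swap_xy_image
      ver.continuous_on_row_map)

lemma square_map_image: "square_map \<phi>b \<phi>t \<psi>l \<psi>r ` rect 1 1 = rect 1 1"
  by (simp only: square_map_def image_comp[symmetric] hor.row_map_image ver.row_map_image swap_xy_image)

lemma inj_on_square_map: "inj_on (square_map \<phi>b \<phi>t \<psi>l \<psi>r) (rect 1 1)"
  unfolding square_map_def
  by (intro comp_inj_on inj_on_subset[OF inj_swap_xy] subset_UNIV hor.inj_on_row_map)
    (simp_all add: image_comp[symmetric] hor.row_map_image swap_xy_image ver.inj_on_row_map)

lemma square_map_bottom: "0 \<le> s \<Longrightarrow> s \<le> 1 \<Longrightarrow> square_map \<phi>b \<phi>t \<psi>l \<psi>r (pt s 0) = pt (\<phi>b s) 0"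
  using hor.bot.range01[of s] by (simp add: square_map_def hor.row_map_bottom ver.row_map_left)

lemma square_map_top: "0 \<le> s \<Longrightarrow> s \<le> 1 \<Longrightarrow> square_map \<phi>b \<phi>t \<psi>l \<psi>r (pt s 1) = pt (\<phi>t s) 1"
  using hor.top.range01[of s] by (simp add: square_map_def hor.row_map_top ver.row_map_right)

lemma square_map_left: "0 \<le> s \<Longrightarrow> s \<le> 1 \<Longrightarrow> square_map \<phi>b \<phi>t \<psi>l \<psi>r (pt 0 s) = pt 0 (\<psi>l s)"
  by (simp add: square_map_def hor.row_map_left ver.row_map_bottom)

lemma square_map_right: "0 \<le> s \<Longrightarrow> s \<le> 1 \<Longrightarrow> square_map \<phi>b \<phi>t \<psi>l \<psi>r (pt 1 s) = pt 1 (\<psi>r s)"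
  by (simp add: square_map_def hor.row_map_right ver.row_map_top)

text \<open>The differential is \<open>S \<circ> [a' b'; 0 1] \<circ> S \<circ> [a b; 0 1]\<close> with \<open>S\<close> the swap, i.e.
  the matrix \<open>[a b; a b' a' + b b']\<close> of determinant \<open>a a'\<close>.\<close>

lemma square_map_deriv:
  assumes "0 < z$1" "z$1 < 1" "0 < z$2" "z$2 < 1"
  obtains p q r s where "(square_map \<phi>b \<phi>t \<psi>l \<psi>r has_derivative mat2 p q r s) (at z)"
    "\<bar>p\<bar> + \<bar>q\<bar> + \<bar>r\<bar> + \<bar>s\<bar> \<le> 50 * K^8" "1 / K^4 \<le> p * s - q * r"
proof -
  have K: "K \<ge> 1" by (rule hor.bot.K_ge_1)
  obtain a b where ab: "(row_map \<phi>b \<phi>t has_derivative mat2 a b 0 1) (at z)"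
    "1 / K^2 \<le> a" "a \<le> K^2" "\<bar>b\<bar> \<le> 6 * K^4"
    using hor.row_map_deriv[OF assms] by blast
  have "0 < 1 / K^2" using K by simp
  then have pa: "0 < a" using ab(2) by linarith
  define w where "w = swap_xy (row_map \<phi>b \<phi>t z)"
  have "0 < w$1" "w$1 < 1" "0 < w$2" "w$2 < 1"
    using hor.row_map_interior[OF assms] by (auto simp: w_def swap_xy_def)
  then obtain a' b' where ab': "(row_map \<psi>l \<psi>r has_derivative mat2 a' b' 0 1) (at w)"
    "1 / K^2 \<le> a'" "a' \<le> K^2" "\<bar>b'\<bar> \<le> 6 * K^4"
    using ver.row_map_deriv by blast
  have "((\<lambda>z. swap_xy (row_map \<phi>b \<phi>t z)) has_derivative (\<lambda>v. mat2 0 1 1 0 (mat2 a b 0 1 v))) (at z)"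
    by (rule has_derivative_compose[OF ab(1) swap_xy_deriv])
  then have "((\<lambda>z. row_map \<psi>l \<psi>r (swap_xy (row_map \<phi>b \<phi>t z))) has_derivative
      (\<lambda>v. mat2 a' b' 0 1 (mat2 0 1 1 0 (mat2 a b 0 1 v)))) (at z)"
    by (rule has_derivative_compose) (use ab'(1) in \<open>simp add: w_def\<close>)
  then have "(square_map \<phi>b \<phi>t \<psi>l \<psi>r has_derivative
      (\<lambda>v. mat2 0 1 1 0 (mat2 a' b' 0 1 (mat2 0 1 1 0 (mat2 a b 0 1 v))))) (at z)"
    unfolding square_map_def o_def by (rule has_derivative_compose[OF _ swap_xy_deriv])
  moreover have "(\<lambda>v. mat2 0 1 1 0 (mat2 a' b' 0 1 (mat2 0 1 1 0 (mat2 a b 0 1 v)))) =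
      mat2 a b (b' * a) (a' + b' * b)"
    by (simp add: fun_eq_iff mat2_def algebra_simps)
  moreover have "1 / K^4 \<le> a * (a' + b' * b) - b * (b' * a)"
  proof -
    have "1 / K^4 = (1 / K^2) * (1 / K^2)" by (simp add: power2_eq_square power4_eq_xxxx)
    also have "\<dots> \<le> a * a'" using ab ab' pa by (intro mult_mono) auto
    finally show ?thesis by (simp add: algebra_simps)
  qed
  moreover have "\<bar>a\<bar> + \<bar>b\<bar> + \<bar>b' * a\<bar> + \<bar>a' + b' * b\<bar> \<le> 50 * K^8"
  proof -
    have "\<bar>b' * a\<bar> \<le> 6 * K^4 * K^2" "\<bar>b' * b\<bar> \<le> 6 * K^4 * (6 * K^4)"
      unfolding abs_mult by (intro mult_mono; use ab ab' pa in simp)+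
    moreover have "K^2 \<le> K^8" "K^4 \<le> K^8" "K^4 * K^2 \<le> K^8" "K^4 * K^4 = K^8"
      using power_increasing[OF _ K] by (simp_all add: power_add[symmetric])
    moreover have "0 < a'" using ab'(2) \<open>0 < 1 / K^2\<close> by linarith
    ultimately show ?thesis
      using ab ab' pa abs_triangle_ineq[of a' "b' * b"] by (simp only: abs_of_pos)
  qed
  ultimately show ?thesis using that by metis
qed

end

section \<open>Edges and symmetries of rectangles\<close>

definition affine2 :: "real \<Rightarrow> real \<Rightarrow> real \<Rightarrow> real \<Rightarrow> real \<Rightarrow> real \<Rightarrow> real^2 \<Rightarrow> real^2" where
  "affine2 \<alpha> \<beta> \<gamma> \<delta> c1 c2 z = mat2 \<alpha> \<beta> \<gamma> \<delta> z + pt c1 c2"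

lemma affine2_pt: "affine2 \<alpha> \<beta> \<gamma> \<delta> c1 c2 (pt x y) = pt (\<alpha> * x + \<beta> * y + c1) (\<gamma> * x + \<delta> * y + c2)"
  by (simp add: affine2_def mat2_def)

lemma inj_affine2:
  assumes "\<alpha> * \<delta> - \<beta> * \<gamma> \<noteq> 0"
  shows "inj (affine2 \<alpha> \<beta> \<gamma> \<delta> c1 c2)"
proof (rule injI)
  fix u v assume "affine2 \<alpha> \<beta> \<gamma> \<delta> c1 c2 u = affine2 \<alpha> \<beta> \<gamma> \<delta> c1 c2 v"
  then have "\<alpha> * (u$1 - v$1) + \<beta> * (u$2 - v$2) = 0" "\<gamma> * (u$1 - v$1) + \<delta> * (u$2 - v$2) = 0"
    by (simp_all add: affine2_def mat2_def vec2_eq_iff algebra_simps)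
  then have "(\<alpha> * \<delta> - \<beta> * \<gamma>) * (u$1 - v$1) = 0" "(\<alpha> * \<delta> - \<beta> * \<gamma>) * (u$2 - v$2) = 0"
    by algebra+
  then show "u = v" using assms by (simp add: vec2_eq_iff)
qed

lemma affine2_closed_segment:
  "affine2 \<alpha> \<beta> \<gamma> \<delta> c1 c2 ` closed_segment u v =
   closed_segment (affine2 \<alpha> \<beta> \<gamma> \<delta> c1 c2 u) (affine2 \<alpha> \<beta> \<gamma> \<delta> c1 c2 v)"
proof -
  have "closed_segment (affine2 \<alpha> \<beta> \<gamma> \<delta> c1 c2 u) (affine2 \<alpha> \<beta> \<gamma> \<delta> c1 c2 v) =
      (\<lambda>x. pt c1 c2 + x) ` closed_segment (mat2 \<alpha> \<beta> \<gamma> \<delta> u) (mat2 \<alpha> \<beta> \<gamma> \<delta> v)"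
    unfolding affine2_def by (simp add: add.commute closed_segment_translation)
  also have "closed_segment (mat2 \<alpha> \<beta> \<gamma> \<delta> u) (mat2 \<alpha> \<beta> \<gamma> \<delta> v) = mat2 \<alpha> \<beta> \<gamma> \<delta> ` closed_segment u v"
    by (rule closed_segment_linear_image[OF linear_mat2])
  finally show ?thesis by (simp add: image_image affine2_def add.commute)
qed

lemma continuous_on_affine2: "continuous_on A (affine2 \<alpha> \<beta> \<gamma> \<delta> c1 c2)"
  unfolding affine2_def by (intro continuous_on_add linear_continuous_on[OF bounded_linear_mat2] continuous_on_const)

lemma affine2_deriv: "(affine2 \<alpha> \<beta> \<gamma> \<delta> c1 c2 has_derivative mat2 \<alpha> \<beta> \<gamma> \<delta>) (at z)"
proof -
  have "(affine2 \<alpha> \<beta> \<gamma> \<delta> c1 c2 has_derivative (\<lambda>v. mat2 \<alpha> \<beta> \<gamma> \<delta> v + 0)) (at z)"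
    unfolding affine2_def[abs_def]
    by (rule has_derivative_add[OF bounded_linear_imp_has_derivative[OF bounded_linear_mat2] has_derivative_const])
  then show ?thesis by (simp del: pt_arith)
qed

lemma dist_affine2_horizontal:
  "dist (affine2 \<alpha> \<beta> \<gamma> \<delta> c1 c2 (pt x y)) (affine2 \<alpha> \<beta> \<gamma> \<delta> c1 c2 (pt x' y)) = sqrt (\<alpha>^2 + \<gamma>^2) * \<bar>x - x'\<bar>"
proof -
  have "dist (affine2 \<alpha> \<beta> \<gamma> \<delta> c1 c2 (pt x y)) (affine2 \<alpha> \<beta> \<gamma> \<delta> c1 c2 (pt x' y)) = sqrt ((x - x')^2 * (\<alpha>^2 + \<gamma>^2))"
    by (simp add: dist_norm affine2_pt norm_pt power2_eq_square algebra_simps)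
  then show ?thesis by (simp add: real_sqrt_mult mult.commute)
qed

lemma dist_affine2_vertical:
  "dist (affine2 \<alpha> \<beta> \<gamma> \<delta> c1 c2 (pt x y)) (affine2 \<alpha> \<beta> \<gamma> \<delta> c1 c2 (pt x y')) = sqrt (\<beta>^2 + \<delta>^2) * \<bar>y - y'\<bar>"
proof -
  have "dist (affine2 \<alpha> \<beta> \<gamma> \<delta> c1 c2 (pt x y)) (affine2 \<alpha> \<beta> \<gamma> \<delta> c1 c2 (pt x y')) = sqrt ((y - y')^2 * (\<beta>^2 + \<delta>^2))"
    by (simp add: dist_norm affine2_pt norm_pt power2_eq_square algebra_simps)
  then show ?thesis by (simp add: real_sqrt_mult mult.commute)
qed

text \<open>Edges are numbered counterclockwise starting with the bottom one, as in \<open>rect_edges\<close> and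
  \<open>rect_loop\<close>.\<close>

definition edge :: "real \<Rightarrow> real \<Rightarrow> nat \<Rightarrow> (real^2) set" where
  "edge w h i =
    (if i = 0 then closed_segment (pt 0 0) (pt w 0)
     else if i = 1 then closed_segment (pt w 0) (pt w h)
     else if i = 2 then closed_segment (pt w h) (pt 0 h)
     else closed_segment (pt 0 h) (pt 0 0))"

lemma edge_eq:
  "edge w h 0 = closed_segment (pt 0 0) (pt w 0)" "edge w h 1 = closed_segment (pt w 0) (pt w h)"
  "edge w h 2 = closed_segment (pt w h) (pt 0 h)" "edge w h 3 = closed_segment (pt 0 h) (pt 0 0)"
  by (simp_all add: edge_def)

lemma rect_edges_eq: "rect_edges w h = {edge w h 0, edge w h 1, edge w h 2, edge w h 3}"
  by (simp add: rect_edges_def edge_def)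

lemma less_4_cases: "(i::nat) < 4 \<Longrightarrow> i = 0 \<or> i = 1 \<or> i = 2 \<or> i = 3"
  by auto

lemma all_less_4: "(\<forall>i<4. P i) \<longleftrightarrow> P 0 \<and> P 1 \<and> P 2 \<and> P (3::nat)"
  by (auto dest: less_4_cases)

lemma ex_less_4: "(\<exists>i<4. P i) \<longleftrightarrow> P 0 \<or> P 1 \<or> P 2 \<or> P (3::nat)"
  using all_less_4[of "\<lambda>i. \<not> P i"] by blast

context
  fixes w h :: real
  assumes wh: "0 < w" "0 < h"
begin

lemma mem_edge:
  "z \<in> edge w h 0 \<longleftrightarrow> z$2 = 0 \<and> 0 \<le> z$1 \<and> z$1 \<le> w"
  "z \<in> edge w h (Suc 0) \<longleftrightarrow> z$1 = w \<and> 0 \<le> z$2 \<and> z$2 \<le> h"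
  "z \<in> edge w h 1 \<longleftrightarrow> z$1 = w \<and> 0 \<le> z$2 \<and> z$2 \<le> h"
  "z \<in> edge w h 2 \<longleftrightarrow> z$2 = h \<and> 0 \<le> z$1 \<and> z$1 \<le> w"
  "z \<in> edge w h 3 \<longleftrightarrow> z$1 = 0 \<and> 0 \<le> z$2 \<and> z$2 \<le> h"
  using wh by (auto simp: edge_def closed_segment_horizontal closed_segment_vertical)

lemma frontier_rect_eq_edges: "frontier (rect w h) = edge w h 0 \<union> edge w h 1 \<union> edge w h 2 \<union> edge w h 3"
proof -
  have "z \<in> frontier (rect w h) \<longleftrightarrow>
      z \<in> edge w h 0 \<or> z \<in> edge w h 1 \<or> z \<in> edge w h 2 \<or> z \<in> edge w h 3" for z
    unfolding frontier_rect[OF wh] mem_Collect_eq mem_rect mem_edge(1,3-5) using wh by (smt (verit))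
  then show ?thesis by blast
qed

lemma edge_subset_frontier: "i < 4 \<Longrightarrow> edge w h i \<subseteq> frontier (rect w h)"
  unfolding frontier_rect_eq_edges by (elim less_4_cases[elim_format] disjE) auto

lemma opposite_edges_disjoint: "edge w h 0 \<inter> edge w h 2 = {}" "edge w h 1 \<inter> edge w h 3 = {}"
  using wh by (auto simp: mem_edge)

lemma corner_mem_edge:
  "pt w 0 \<in> edge w h 0 \<inter> edge w h 1" "pt w h \<in> edge w h 1 \<inter> edge w h 2"
  "pt 0 h \<in> edge w h 2 \<inter> edge w h 3" "pt 0 0 \<in> edge w h 3 \<inter> edge w h 0"
  using wh by (auto simp: mem_edge)

lemma edges_distinct:
  "edge w h 0 \<noteq> edge w h 1" "edge w h 0 \<noteq> edge w h 2" "edge w h 0 \<noteq> edge w h 3"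
  "edge w h 1 \<noteq> edge w h 2" "edge w h 1 \<noteq> edge w h 3" "edge w h 2 \<noteq> edge w h 3"
proof -
  have "pt (w/2) 0 \<in> edge w h 0" "pt w (h/2) \<in> edge w h 1" "pt (w/2) h \<in> edge w h 2"
    "pt (w/2) 0 \<notin> edge w h 1" "pt (w/2) 0 \<notin> edge w h 2" "pt (w/2) 0 \<notin> edge w h 3"
    "pt w (h/2) \<notin> edge w h 2" "pt w (h/2) \<notin> edge w h 3" "pt (w/2) h \<notin> edge w h 3"
    using wh by (auto simp: mem_edge)
  then show "edge w h 0 \<noteq> edge w h 1" "edge w h 0 \<noteq> edge w h 2" "edge w h 0 \<noteq> edge w h 3"
    "edge w h 1 \<noteq> edge w h 2" "edge w h 1 \<noteq> edge w h 3" "edge w h 2 \<noteq> edge w h 3"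
    by metis+
qed

end

lemma edge_eq_edge_iff:
  assumes "0 < w" "0 < h" "i < 4" "j < 4"
  shows "edge w h i = edge w h j \<longleftrightarrow> i = j"
  using assms(3,4) edges_distinct[OF assms(1,2)] edges_distinct[OF assms(1,2), THEN not_sym]
  by (elim less_4_cases[elim_format] disjE) (simp_all del: One_nat_def)

text \<open>The eight alternatives are the rotations and reflections of the 4-cycle
  \<open>A\<^sub>0 A\<^sub>1 A\<^sub>2 A\<^sub>3\<close>.\<close>

lemma four_cycle_cases:
  fixes X0 X1 X2 X3 A0 A1 A2 A3 :: "'a set"
  assumes "X0 \<in> {A0,A1,A2,A3}" "X1 \<in> {A0,A1,A2,A3}" "X2 \<in> {A0,A1,A2,A3}" "X3 \<in> {A0,A1,A2,A3}"
    and "A0 \<noteq> A1" "A0 \<noteq> A2" "A0 \<noteq> A3" "A1 \<noteq> A2" "A1 \<noteq> A3" "A2 \<noteq> A3"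
    and "X0 \<noteq> X1" "X0 \<noteq> X2" "X0 \<noteq> X3" "X1 \<noteq> X2" "X1 \<noteq> X3" "X2 \<noteq> X3"
    and "A0 \<inter> A2 = {}" "A1 \<inter> A3 = {}"
    and "X0 \<inter> X1 \<noteq> {}" "X1 \<inter> X2 \<noteq> {}" "X2 \<inter> X3 \<noteq> {}" "X3 \<inter> X0 \<noteq> {}"
  shows "(X0 = A0 \<and> X1 = A1 \<and> X2 = A2 \<and> X3 = A3) \<or> (X0 = A1 \<and> X1 = A2 \<and> X2 = A3 \<and> X3 = A0) \<or>
         (X0 = A2 \<and> X1 = A3 \<and> X2 = A0 \<and> X3 = A1) \<or> (X0 = A3 \<and> X1 = A0 \<and> X2 = A1 \<and> X3 = A2) \<or>
         (X0 = A0 \<and> X1 = A3 \<and> X2 = A2 \<and> X3 = A1) \<or> (X0 = A1 \<and> X1 = A0 \<and> X2 = A3 \<and> X3 = A2) \<or>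
         (X0 = A2 \<and> X1 = A1 \<and> X2 = A0 \<and> X3 = A3) \<or> (X0 = A3 \<and> X1 = A2 \<and> X2 = A1 \<and> X3 = A0)"
proof -
  have disj: "A2 \<inter> A0 = {}" "A3 \<inter> A1 = {}" using assms(17,18) by blast+
  from assms(1-4) show ?thesis
    by (elim insertE emptyE) (use assms(5-22) disj in simp_all)
qed

text \<open>The affine maps of the unit square onto \<open>[0,a] \<times> [0,b]\<close> that map edges to edges: the
  linear part is \<open>diag(a,b)\<close> composed with a rotation, resp.\ with a reflection.\<close>

definition rect_rotations :: "real \<Rightarrow> real \<Rightarrow> (real^2 \<Rightarrow> real^2) set" where
  "rect_rotations a b =
     {affine2 a 0 0 b 0 0, affine2 0 (-a) b 0 a 0, affine2 (-a) 0 0 (-b) a b, affine2 0 a (-b) 0 0 b}"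

definition rect_reflections :: "real \<Rightarrow> real \<Rightarrow> (real^2 \<Rightarrow> real^2) set" where
  "rect_reflections a b =
     {affine2 (-a) 0 0 b a 0, affine2 0 (-a) (-b) 0 a b, affine2 a 0 0 (-b) 0 b, affine2 0 a b 0 0 0}"

lemma affine2_image_edge:
  "affine2 \<alpha> \<beta> \<gamma> \<delta> c1 c2 ` edge 1 1 0 = closed_segment (pt c1 c2) (pt (\<alpha> + c1) (\<gamma> + c2))"
  "affine2 \<alpha> \<beta> \<gamma> \<delta> c1 c2 ` edge 1 1 1 = closed_segment (pt (\<alpha> + c1) (\<gamma> + c2)) (pt (\<alpha> + \<beta> + c1) (\<gamma> + \<delta> + c2))"
  "affine2 \<alpha> \<beta> \<gamma> \<delta> c1 c2 ` edge 1 1 2 = closed_segment (pt (\<alpha> + \<beta> + c1) (\<gamma> + \<delta> + c2)) (pt (\<beta> + c1) (\<delta> + c2))"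
  "affine2 \<alpha> \<beta> \<gamma> \<delta> c1 c2 ` edge 1 1 3 = closed_segment (pt (\<beta> + c1) (\<delta> + c2)) (pt c1 c2)"
  by (simp_all add: edge_eq affine2_closed_segment affine2_pt del: One_nat_def)

lemma closed_segment_eq_if_ends:
  "u = u' \<Longrightarrow> v = v' \<Longrightarrow> closed_segment u v = closed_segment u' v'"
  by simp

lemma closed_segment_eq_if_ends_swapped:
  "u = v' \<Longrightarrow> v = u' \<Longrightarrow> closed_segment u v = closed_segment u' v'"
  by (simp add: closed_segment_commute)

lemma rect_symmetry_image_edge:
  shows "affine2 a 0 0 b 0 0 ` edge 1 1 0 = edge a b 0"
    "affine2 a 0 0 b 0 0 ` edge 1 1 1 = edge a b 1"
    "affine2 a 0 0 b 0 0 ` edge 1 1 2 = edge a b 2"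
    "affine2 a 0 0 b 0 0 ` edge 1 1 3 = edge a b 3"
    "affine2 0 (-a) b 0 a 0 ` edge 1 1 0 = edge a b 1"
    "affine2 0 (-a) b 0 a 0 ` edge 1 1 1 = edge a b 2"
    "affine2 0 (-a) b 0 a 0 ` edge 1 1 2 = edge a b 3"
    "affine2 0 (-a) b 0 a 0 ` edge 1 1 3 = edge a b 0"
    "affine2 (-a) 0 0 (-b) a b ` edge 1 1 0 = edge a b 2"
    "affine2 (-a) 0 0 (-b) a b ` edge 1 1 1 = edge a b 3"
    "affine2 (-a) 0 0 (-b) a b ` edge 1 1 2 = edge a b 0"
    "affine2 (-a) 0 0 (-b) a b ` edge 1 1 3 = edge a b 1"
    "affine2 0 a (-b) 0 0 b ` edge 1 1 0 = edge a b 3"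
    "affine2 0 a (-b) 0 0 b ` edge 1 1 1 = edge a b 0"
    "affine2 0 a (-b) 0 0 b ` edge 1 1 2 = edge a b 1"
    "affine2 0 a (-b) 0 0 b ` edge 1 1 3 = edge a b 2"
    "affine2 (-a) 0 0 b a 0 ` edge 1 1 0 = edge a b 0"
    "affine2 (-a) 0 0 b a 0 ` edge 1 1 1 = edge a b 3"
    "affine2 (-a) 0 0 b a 0 ` edge 1 1 2 = edge a b 2"
    "affine2 (-a) 0 0 b a 0 ` edge 1 1 3 = edge a b 1"
    "affine2 0 (-a) (-b) 0 a b ` edge 1 1 0 = edge a b 1"
    "affine2 0 (-a) (-b) 0 a b ` edge 1 1 1 = edge a b 0"
    "affine2 0 (-a) (-b) 0 a b ` edge 1 1 2 = edge a b 3"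
    "affine2 0 (-a) (-b) 0 a b ` edge 1 1 3 = edge a b 2"
    "affine2 a 0 0 (-b) 0 b ` edge 1 1 0 = edge a b 2"
    "affine2 a 0 0 (-b) 0 b ` edge 1 1 1 = edge a b 1"
    "affine2 a 0 0 (-b) 0 b ` edge 1 1 2 = edge a b 0"
    "affine2 a 0 0 (-b) 0 b ` edge 1 1 3 = edge a b 3"
    "affine2 0 a b 0 0 0 ` edge 1 1 0 = edge a b 3"
    "affine2 0 a b 0 0 0 ` edge 1 1 1 = edge a b 2"
    "affine2 0 a b 0 0 0 ` edge 1 1 2 = edge a b 1"
    "affine2 0 a b 0 0 0 ` edge 1 1 3 = edge a b 0"
  unfolding affine2_image_edge unfolding edge_eq
  by ((rule closed_segment_eq_if_ends, simp, simp) | (rule closed_segment_eq_if_ends_swapped, simp, simp))+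

lemma edge_cycle_cases:
  assumes ab: "0 < a" "0 < b"
    and X: "\<And>i. i < 4 \<Longrightarrow> X i \<in> rect_edges a b"
    and distinct: "\<And>i j. i < 4 \<Longrightarrow> j < 4 \<Longrightarrow> i \<noteq> j \<Longrightarrow> X i \<noteq> X j"
    and adjacent: "X 0 \<inter> X 1 \<noteq> {}" "X 1 \<inter> X 2 \<noteq> {}" "X 2 \<inter> X 3 \<noteq> {}" "X 3 \<inter> X 0 \<noteq> {}"
  obtains M where "M \<in> rect_rotations a b \<union> rect_reflections a b" "\<And>i. i < 4 \<Longrightarrow> X i = M ` edge 1 1 i"
proof -
  have "(X 0 = edge a b 0 \<and> X 1 = edge a b 1 \<and> X 2 = edge a b 2 \<and> X 3 = edge a b 3) \<or>
        (X 0 = edge a b 1 \<and> X 1 = edge a b 2 \<and> X 2 = edge a b 3 \<and> X 3 = edge a b 0) \<or>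
        (X 0 = edge a b 2 \<and> X 1 = edge a b 3 \<and> X 2 = edge a b 0 \<and> X 3 = edge a b 1) \<or>
        (X 0 = edge a b 3 \<and> X 1 = edge a b 0 \<and> X 2 = edge a b 1 \<and> X 3 = edge a b 2) \<or>
        (X 0 = edge a b 0 \<and> X 1 = edge a b 3 \<and> X 2 = edge a b 2 \<and> X 3 = edge a b 1) \<or>
        (X 0 = edge a b 1 \<and> X 1 = edge a b 0 \<and> X 2 = edge a b 3 \<and> X 3 = edge a b 2) \<or>
        (X 0 = edge a b 2 \<and> X 1 = edge a b 1 \<and> X 2 = edge a b 0 \<and> X 3 = edge a b 3) \<or>
        (X 0 = edge a b 3 \<and> X 1 = edge a b 2 \<and> X 2 = edge a b 1 \<and> X 3 = edge a b 0)"
    by (rule four_cycle_cases[OF X[of 0, unfolded rect_edges_eq] X[of 1, unfolded rect_edges_eq]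
          X[of 2, unfolded rect_edges_eq] X[of 3, unfolded rect_edges_eq] edges_distinct[OF ab]
          distinct[of 0 1] distinct[of 0 2] distinct[of 0 3] distinct[of 1 2] distinct[of 1 3]
          distinct[of 2 3] opposite_edges_disjoint[OF ab] adjacent]) simp_all
  then have "\<exists>M \<in> rect_rotations a b \<union> rect_reflections a b. \<forall>i<4. X i = M ` edge 1 1 i"
    unfolding rect_rotations_def rect_reflections_def all_less_4
    by (elim disjE conjE) (simp_all add: rect_symmetry_image_edge del: One_nat_def)
  then show ?thesis using that by blast
qed

lemma image_eq_if_right_inverse:
  assumes "\<And>z. z \<in> A \<Longrightarrow> f z \<in> B" "\<And>w. w \<in> B \<Longrightarrow> g w \<in> A \<and> f (g w) = w"
  shows "f ` A = B"
  using assms by (auto intro: image_eqI[OF sym])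

lemma rect_rotation_image:
  assumes M: "M \<in> rect_rotations a b" and ab: "0 < a" "0 < b"
  shows "M ` rect 1 1 = rect a b"
proof -
  have frac: "0 \<le> t / c \<and> t / c \<le> 1" if "0 \<le> t" "t \<le> c" for t c :: real
    using that by (auto simp: divide_le_eq_1)
  have scale: "0 \<le> x * c \<and> x * c \<le> c" if "0 \<le> x" "x \<le> 1" "0 < c" for x c :: real
    using that by (simp add: mult_le_cancel_right1)
  note facts = scale[of _ a] scale[of _ b] frac[of _ a] frac[of _ b] ab
  from M consider
      "M = affine2 a 0 0 b 0 0" | "M = affine2 0 (-a) b 0 a 0"
    | "M = affine2 (-a) 0 0 (-b) a b" | "M = affine2 0 a (-b) 0 0 b"
    by (auto simp: rect_rotations_def)
  then show ?thesis
  proof cases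
    case 1
    show ?thesis unfolding 1
      by (rule image_eq_if_right_inverse[where g = "\<lambda>w. pt (w$1 / a) (w$2 / b)"])
        (use facts in \<open>auto simp: mem_rect affine2_pt affine2_def mat2_def mult.commute vec2_eq_iff\<close>)
  next
    case 2
    show ?thesis unfolding 2
      by (rule image_eq_if_right_inverse[where g = "\<lambda>w. pt (w$2 / b) (1 - w$1 / a)"])
        (use facts in \<open>auto simp: mem_rect affine2_pt affine2_def mat2_def mult.commute vec2_eq_iff algebra_simps\<close>)
  next
    case 3
    show ?thesis unfolding 3
      by (rule image_eq_if_right_inverse[where g = "\<lambda>w. pt (1 - w$1 / a) (1 - w$2 / b)"])
        (use facts in \<open>auto simp: mem_rect affine2_pt affine2_def mat2_def mult.commute vec2_eq_iff algebra_simps\<close>)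
  next
    case 4
    show ?thesis unfolding 4
      by (rule image_eq_if_right_inverse[where g = "\<lambda>w. pt (1 - w$2 / b) (w$1 / a)"])
        (use facts in \<open>auto simp: mem_rect affine2_pt affine2_def mat2_def mult.commute vec2_eq_iff algebra_simps\<close>)
  qed
qed

lemma rect_rotation_affine2:
  assumes M: "M \<in> rect_rotations a b" and ab: "0 < b" "b \<le> a"
  obtains \<alpha> \<beta> \<gamma> \<delta> c1 c2 where "M = affine2 \<alpha> \<beta> \<gamma> \<delta> c1 c2" "\<alpha> * \<delta> - \<beta> * \<gamma> = a * b"
    "\<bar>\<alpha>\<bar> + \<bar>\<beta>\<bar> + \<bar>\<gamma>\<bar> + \<bar>\<delta>\<bar> \<le> 2 * a"
  using M ab that by (auto simp: rect_rotations_def)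

section \<open>Orientation\<close>

lemma toC_pt [simp]: "toC (pt x y) = Complex x y"
  by (simp add: toC_def)

lemma ofC_Complex [simp]: "ofC (Complex x y) = pt x y"
  by (simp add: ofC_def)

lemma ofC_0 [simp]: "ofC 0 = pt 0 0"
  by (simp add: ofC_def)

lemma toC_ofC [simp]: "toC (ofC z) = z"
  by (simp add: toC_def ofC_def)

lemma ofC_toC [simp]: "ofC (toC z) = z"
  by (simp add: toC_def ofC_def vec2_eq_iff)

lemma linear_toC: "linear toC"
  by (rule linearI) (simp_all add: toC_def complex_eq_iff)

lemma linear_ofC: "linear ofC"
  by (rule linearI) (simp_all add: ofC_def vec2_eq_iff)

lemma continuous_on_toC: "continuous_on A toC"
  using linear_continuous_on linear_conv_bounded_linear linear_toC by blast

lemma continuous_on_ofC: "continuous_on A ofC"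
  using linear_continuous_on linear_conv_bounded_linear linear_ofC by blast

lemma ofC_closed_segment: "ofC ` closed_segment u v = closed_segment (ofC u) (ofC v)"
  by (rule closed_segment_linear_image[OF linear_ofC, symmetric])

lemma mem_closed_segment_iff_ofC: "z \<in> closed_segment u v \<longleftrightarrow> ofC z \<in> closed_segment (ofC u) (ofC v)"
  by (metis (no_types, lifting) image_iff ofC_closed_segment toC_ofC)

lemma ofC_rect_loop_image: "ofC ` path_image (rect_loop 1 1) = frontier (rect 1 1)"
  by (simp add: rect_loop_def path_image_join image_Un ofC_closed_segment frontier_rect_eq_edges
      edge_eq Un_assoc del: One_nat_def)

lemma centre_notin_edge: "0 < a \<Longrightarrow> 0 < b \<Longrightarrow> i < 4 \<Longrightarrow> pt (a/2) (b/2) \<notin> edge a b i"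
  by (auto simp: mem_edge dest!: less_4_cases)

text \<open>If \<open>f\<close> maps every edge of the unit square onto the same edge of \<open>[0,a] \<times> [0,b]\<close> as \<open>M\<close>
  does, the straight-line homotopy from \<open>f\<close> to \<open>M\<close> stays inside that (convex) edge and hence
  avoids the centre.\<close>

lemma winding_number_edgewise_eq:
  fixes f M :: "real^2 \<Rightarrow> real^2"
  assumes ab: "0 < a" "0 < b"
    and f: "continuous_on (frontier (rect 1 1)) f" and M: "continuous_on UNIV M"
    and edges: "\<And>i. i < 4 \<Longrightarrow> f ` edge 1 1 i = M ` edge 1 1 i"
    and M_edges: "\<And>i. i < 4 \<Longrightarrow> M ` edge 1 1 i \<in> rect_edges a b"
  shows "winding_number (toC \<circ> f \<circ> ofC \<circ> rect_loop 1 1) (Complex (a/2) (b/2)) =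
         winding_number (toC \<circ> M \<circ> ofC \<circ> rect_loop 1 1) (Complex (a/2) (b/2))"
proof (rule winding_number_homotopic_loops, rule homotopic_loops_linear)
  have path: "path (toC \<circ> g \<circ> ofC \<circ> rect_loop 1 1)" if "continuous_on (frontier (rect 1 1)) g" for g
  proof -
    have "continuous_on (path_image (rect_loop 1 1)) (toC \<circ> g \<circ> ofC)"
      by (intro continuous_on_compose continuous_on_ofC continuous_on_toC)
        (simp add: ofC_rect_loop_image that)
    then show ?thesis by (simp add: path_continuous_image rect_loop_def o_assoc)
  qed
  show "path (toC \<circ> f \<circ> ofC \<circ> rect_loop 1 1)" "path (toC \<circ> M \<circ> ofC \<circ> rect_loop 1 1)"
    using path f continuous_on_subset[OF M] by auto
  show "pathfinish (toC \<circ> f \<circ> ofC \<circ> rect_loop 1 1) = pathstart (toC \<circ> f \<circ> ofC \<circ> rect_loop 1 1)"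
    "pathfinish (toC \<circ> M \<circ> ofC \<circ> rect_loop 1 1) = pathstart (toC \<circ> M \<circ> ofC \<circ> rect_loop 1 1)"
    by (simp_all add: pathstart_def pathfinish_def rect_loop_def joinpaths_def linepath_def)
  fix t :: real assume t: "t \<in> {0..1}"
  define z where "z = ofC (rect_loop 1 1 t)"
  have "z \<in> frontier (rect 1 1)"
    using t ofC_rect_loop_image by (auto simp: z_def path_image_def)
  then have "\<exists>i<4. z \<in> edge 1 1 i"
    unfolding ex_less_4 frontier_rect_eq_edges[OF zero_less_one zero_less_one] by blast
  then obtain i where i: "i < 4" "z \<in> edge 1 1 i" by blast
  have "\<exists>j<4. M ` edge 1 1 i = edge a b j"
    using M_edges[OF i(1)] unfolding ex_less_4 rect_edges_eq by blast
  then obtain j where j: "j < 4" "M ` edge 1 1 i = edge a b j" by blast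
  have "closed_segment (f z) (M z) \<subseteq> edge a b j"
    using edges[OF i(1)] i(2) j(2) by (intro closed_segment_subset) (auto simp: edge_def)
  then have "Complex (a/2) (b/2) \<notin> closed_segment (toC (f z)) (toC (M z))"
    using centre_notin_edge[OF ab j(1)] by (auto simp: mem_closed_segment_iff_ofC ofC_closed_segment)
  then show "closed_segment ((toC \<circ> f \<circ> ofC \<circ> rect_loop 1 1) t) ((toC \<circ> M \<circ> ofC \<circ> rect_loop 1 1) t)
      \<subseteq> - {Complex (a/2) (b/2)}"
    by (auto simp: z_def)
qed

lemma winding_number_quadrilateral:
  assumes "z \<notin> closed_segment q0 q1" "z \<notin> closed_segment q1 q2"
    "z \<notin> closed_segment q2 q3" "z \<notin> closed_segment q3 q0"
  shows "winding_number (linepath q0 q1 +++ linepath q1 q2 +++ linepath q2 q3 +++ linepath q3 q0) z =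
    winding_number (linepath q0 q1) z + winding_number (linepath q1 q2) z
    + winding_number (linepath q2 q3) z + winding_number (linepath q3 q0) z"
  using assms by (simp add: winding_number_join path_image_join add.assoc)

lemma centre_notin_rect_sides:
  assumes "0 < a" "0 < b"
  shows "Complex (a/2) (b/2) \<notin> closed_segment 0 (Complex a 0)"
    "Complex (a/2) (b/2) \<notin> closed_segment (Complex a 0) (Complex a b)"
    "Complex (a/2) (b/2) \<notin> closed_segment (Complex a b) (Complex 0 b)"
    "Complex (a/2) (b/2) \<notin> closed_segment (Complex 0 b) 0"
  using assms by (simp_all add: mem_closed_segment_iff_ofC closed_segment_horizontal closed_segment_vertical)

lemma winding_number_rect_sides:
  assumes "0 < a" "0 < b"
  shows "winding_number (linepath 0 (Complex a 0)) (Complex (a/2) (b/2))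
    + winding_number (linepath (Complex a 0) (Complex a b)) (Complex (a/2) (b/2))
    + winding_number (linepath (Complex a b) (Complex 0 b)) (Complex (a/2) (b/2))
    + winding_number (linepath (Complex 0 b) 0) (Complex (a/2) (b/2)) = 1"
proof -
  have "winding_number (rectpath 0 (Complex a b)) (Complex (a/2) (b/2)) = 1"
    by (rule winding_number_rectpath) (use assms in \<open>simp add: in_box_complex_iff\<close>)
  then show ?thesis
    using winding_number_quadrilateral[OF centre_notin_rect_sides[OF assms]]
    by (simp add: rectpath_def Let_def)
qed

lemma affine2_rect_loop:
  "toC \<circ> affine2 \<alpha> \<beta> \<gamma> \<delta> c1 c2 \<circ> ofC \<circ> rect_loop 1 1 =
    linepath (toC (affine2 \<alpha> \<beta> \<gamma> \<delta> c1 c2 (pt 0 0))) (toC (affine2 \<alpha> \<beta> \<gamma> \<delta> c1 c2 (pt 1 0))) +++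
    linepath (toC (affine2 \<alpha> \<beta> \<gamma> \<delta> c1 c2 (pt 1 0))) (toC (affine2 \<alpha> \<beta> \<gamma> \<delta> c1 c2 (pt 1 1))) +++
    linepath (toC (affine2 \<alpha> \<beta> \<gamma> \<delta> c1 c2 (pt 1 1))) (toC (affine2 \<alpha> \<beta> \<gamma> \<delta> c1 c2 (pt 0 1))) +++
    linepath (toC (affine2 \<alpha> \<beta> \<gamma> \<delta> c1 c2 (pt 0 1))) (toC (affine2 \<alpha> \<beta> \<gamma> \<delta> c1 c2 (pt 0 0)))"
  by (auto simp: fun_eq_iff rect_loop_def joinpaths_def linepath_def affine2_def mat2_def ofC_def toC_def
      complex_eq_iff algebra_simps scaleR_conv_of_real)

text \<open>Reflections reverse the orientation: their boundary loop runs through the four sides of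
  \<open>[0,a] \<times> [0,b]\<close> backwards.\<close>

lemma winding_number_rect_reflection:
  assumes ab: "0 < a" "0 < b" and M: "M \<in> rect_reflections a b"
  shows "winding_number (toC \<circ> M \<circ> ofC \<circ> rect_loop 1 1) (Complex (a/2) (b/2)) = -1"
proof -
  let ?c = "Complex (a/2) (b/2)"
  note sides = centre_notin_rect_sides[OF ab]
  have sides': "?c \<notin> closed_segment (Complex a 0) 0" "?c \<notin> closed_segment (Complex a b) (Complex a 0)"
    "?c \<notin> closed_segment (Complex 0 b) (Complex a b)" "?c \<notin> closed_segment 0 (Complex 0 b)"
    using sides by (simp_all add: closed_segment_commute)
  have reverse: "winding_number (linepath v u) ?c = - winding_number (linepath u v) ?c"
    if "?c \<notin> closed_segment u v" for u v
    using winding_number_reversepath[of "linepath u v" ?c] that by simp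
  have "Complex 0 0 = 0" by (simp add: complex_eq_iff)
  have sum: "winding_number (linepath (Complex a 0) 0) ?c + winding_number (linepath 0 (Complex 0 b)) ?c
      + winding_number (linepath (Complex 0 b) (Complex a b)) ?c
      + winding_number (linepath (Complex a b) (Complex a 0)) ?c = -1"
    using winding_number_rect_sides[OF ab] reverse[OF sides(1)] reverse[OF sides(2)]
      reverse[OF sides(3)] reverse[OF sides(4)] by (simp add: algebra_simps)
  from M consider "M = affine2 (-a) 0 0 b a 0" | "M = affine2 0 (-a) (-b) 0 a b"
    | "M = affine2 a 0 0 (-b) 0 b" | "M = affine2 0 a b 0 0 0"
    by (auto simp: rect_reflections_def)
  then show ?thesis
  proof cases
    case 1
    show ?thesis unfolding 1 affine2_rect_loop using winding_number_quadrilateral[OF sides'(1,4,3,2)] sum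
      by (simp add: affine2_pt \<open>Complex 0 0 = 0\<close> algebra_simps)
  next
    case 2
    show ?thesis unfolding 2 affine2_rect_loop using winding_number_quadrilateral[OF sides'(2,1,4,3)] sum
      by (simp add: affine2_pt \<open>Complex 0 0 = 0\<close> algebra_simps)
  next
    case 3
    show ?thesis unfolding 3 affine2_rect_loop using winding_number_quadrilateral[OF sides'(3,2,1,4)] sum
      by (simp add: affine2_pt \<open>Complex 0 0 = 0\<close> algebra_simps)
  next
    case 4
    show ?thesis unfolding 4 affine2_rect_loop using winding_number_quadrilateral[OF sides'(4,3,2,1)] sum
      by (simp add: affine2_pt \<open>Complex 0 0 = 0\<close> algebra_simps)
  qed
qed

lemma edge_maps_follow_rotation:
  assumes ab: "0 < a" "0 < b"
    and hom: "homeomorphism (frontier (rect 1 1)) (frontier (rect a b)) f g"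
    and orientation: "bdry_orientation_preserving f 1 1 a b"
    and edges: "\<forall>E\<in>rect_edges 1 1. f ` E \<in> rect_edges a b"
  obtains M where "M \<in> rect_rotations a b" "\<And>i. i < 4 \<Longrightarrow> f ` edge 1 1 i = M ` edge 1 1 i"
proof -
  have cont: "continuous_on (frontier (rect 1 1)) f" and inj: "inj_on f (frontier (rect 1 1))"
    using hom by (auto simp: homeomorphism_def intro: inj_on_inverseI)
  define X where "X i = f ` edge 1 1 i" for i
  have sub: "edge 1 1 i \<subseteq> frontier (rect 1 1)" if "i < 4" for i
    using edge_subset_frontier[OF zero_less_one zero_less_one that] .
  have X: "X i \<in> rect_edges a b" if "i < 4" for i
  proof -
    have "edge 1 1 i \<in> rect_edges 1 1"
      using less_4_cases[OF that] unfolding rect_edges_eq by (elim disjE) (simp_all del: One_nat_def)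
    then show ?thesis using edges by (simp add: X_def)
  qed
  have distinct: "X i \<noteq> X j" if "i < 4" "j < 4" "i \<noteq> j" for i j
    using inj_on_image_eq_iff[OF inj sub[OF that(1)] sub[OF that(2)]] edge_eq_edge_iff[of 1 1 i j] that
    by (simp add: X_def)
  have "f (pt 1 0) \<in> X 0 \<inter> X 1" "f (pt 1 1) \<in> X 1 \<inter> X 2"
    "f (pt 0 1) \<in> X 2 \<inter> X 3" "f (pt 0 0) \<in> X 3 \<inter> X 0"
    using corner_mem_edge[OF zero_less_one zero_less_one] unfolding X_def by auto
  then have adjacent: "X 0 \<inter> X 1 \<noteq> {}" "X 1 \<inter> X 2 \<noteq> {}" "X 2 \<inter> X 3 \<noteq> {}" "X 3 \<inter> X 0 \<noteq> {}"
    by auto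
  obtain M where M: "M \<in> rect_rotations a b \<union> rect_reflections a b"
    and "\<And>i. i < 4 \<Longrightarrow> X i = M ` edge 1 1 i"
    using edge_cycle_cases[of a b X, OF ab X distinct adjacent] by blast
  then have fM: "\<And>i. i < 4 \<Longrightarrow> f ` edge 1 1 i = M ` edge 1 1 i" by (simp add: X_def)
  have "M \<notin> rect_reflections a b"
  proof
    assume refl: "M \<in> rect_reflections a b"
    have "continuous_on UNIV M"
      using refl by (auto simp: rect_reflections_def continuous_on_affine2)
    then have "winding_number (toC \<circ> f \<circ> ofC \<circ> rect_loop 1 1) (Complex (a/2) (b/2)) = -1"
      using winding_number_edgewise_eq[OF ab cont _ fM] X fM winding_number_rect_reflection[OF ab refl]
      by (simp add: X_def)
    then show False using orientation by (simp add: bdry_orientation_preserving_def)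
  qed
  then show ?thesis using that M fM by blast
qed

lemma norm_ap_horizontal: "0 \<le> a \<Longrightarrow> norm_ap a p (pt d 0) = a * \<bar>d\<bar>"
  by (simp add: norm_ap_def)

lemma norm_ap_vertical: "norm_ap a p (pt 0 d) = a powr (p - 1) * \<bar>d\<bar>"
  by (simp add: norm_ap_def)

lemma edge_pullbacks:
  assumes inj: "inj M" and edges: "\<And>i. i < 4 \<Longrightarrow> f ` edge 1 1 i = M ` edge 1 1 i"
  obtains \<phi>b \<phi>t \<psi>l \<psi>r where
    "\<phi>b 0 = 0" "\<phi>b 1 = 1" "\<phi>t 0 = 0" "\<phi>t 1 = 1" "\<psi>l 0 = 0" "\<psi>l 1 = 1" "\<psi>r 0 = 0" "\<psi>r 1 = 1"
    "\<And>s. 0 \<le> s \<Longrightarrow> s \<le> 1 \<Longrightarrow> f (pt s 0) = M (pt (\<phi>b s) 0)"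
    "\<And>s. 0 \<le> s \<Longrightarrow> s \<le> 1 \<Longrightarrow> f (pt s 1) = M (pt (\<phi>t s) 1)"
    "\<And>s. 0 \<le> s \<Longrightarrow> s \<le> 1 \<Longrightarrow> f (pt 0 s) = M (pt 0 (\<psi>l s))"
    "\<And>s. 0 \<le> s \<Longrightarrow> s \<le> 1 \<Longrightarrow> f (pt 1 s) = M (pt 1 (\<psi>r s))"
proof -
  have preimage: "M (inv M (f z)) = f z \<and> inv M (f z) \<in> edge 1 1 i"
    if i: "i < 4" and z: "z \<in> edge 1 1 i" for i z
  proof -
    obtain y where "y \<in> edge 1 1 i" "f z = M y" using edges[OF i] z by blast
    then show ?thesis using inv_f_f[OF inj] by simp
  qed
  define \<phi>b where "\<phi>b s = inv M (f (pt s 0)) $ 1" for s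
  define \<phi>t where "\<phi>t s = inv M (f (pt s 1)) $ 1" for s
  define \<psi>l where "\<psi>l s = inv M (f (pt 0 s)) $ 2" for s
  define \<psi>r where "\<psi>r s = inv M (f (pt 1 s)) $ 2" for s
  note E = mem_edge[OF zero_less_one zero_less_one]
  have on_edge: "f z = M (pt (inv M (f z) $ 1) (inv M (f z) $ 2))" if "i < 4" "z \<in> edge 1 1 i" for i z
    using preimage[OF that] by (simp add: pt_eta)
  have coordinate: "inv M (f (pt s 0)) $ 2 = 0" "inv M (f (pt s 1)) $ 2 = 1"
    "inv M (f (pt 0 s)) $ 1 = 0" "inv M (f (pt 1 s)) $ 1 = 1" if "0 \<le> s" "s \<le> 1" for s
    using preimage[of 0 "pt s 0"] preimage[of 2 "pt s 1"] preimage[of 3 "pt 0 s"] preimage[of 1 "pt 1 s"] that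
    by (auto simp: E)
  have eqs: "f (pt s 0) = M (pt (\<phi>b s) 0)" "f (pt s 1) = M (pt (\<phi>t s) 1)"
    "f (pt 0 s) = M (pt 0 (\<psi>l s))" "f (pt 1 s) = M (pt 1 (\<psi>r s))" if "0 \<le> s" "s \<le> 1" for s
    using on_edge[of 0 "pt s 0"] on_edge[of 2 "pt s 1"] on_edge[of 3 "pt 0 s"] on_edge[of 1 "pt 1 s"]
      coordinate[OF that] that by (simp_all add: E \<phi>b_def \<phi>t_def \<psi>l_def \<psi>r_def)
  have "inv M (f (pt 0 0)) = pt 0 0" "inv M (f (pt 1 0)) = pt 1 0"
    "inv M (f (pt 1 1)) = pt 1 1" "inv M (f (pt 0 1)) = pt 0 1"
    using preimage[of 0 "pt 0 0"] preimage[of 3 "pt 0 0"] preimage[of 0 "pt 1 0"] preimage[of 1 "pt 1 0"]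
      preimage[of 1 "pt 1 1"] preimage[of 2 "pt 1 1"] preimage[of 2 "pt 0 1"] preimage[of 3 "pt 0 1"]
    by (auto simp: E vec2_eq_iff)
  then have "\<phi>b 0 = 0" "\<phi>b 1 = 1" "\<phi>t 0 = 0" "\<phi>t 1 = 1" "\<psi>l 0 = 0" "\<psi>l 1 = 1" "\<psi>r 0 = 0" "\<psi>r 1 = 1"
    by (simp_all add: \<phi>b_def \<phi>t_def \<psi>l_def \<psi>r_def)
  then show ?thesis using that eqs by blast
qed

text \<open>On an edge parametrised by \<open>e\<close>, both the weighted norm and the affine map \<open>M\<close> act by a
  constant factor, so the pulled-back edge map inherits the bi-Lipschitz bound of \<open>f\<close>.\<close>

lemma bilip01_of_edge:
  assumes L: "L \<ge> 1" and ck: "0 < c" "0 < k" and ends: "\<phi> 0 = 0" "\<phi> 1 = 1"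
    and bilip: "\<forall>u\<in>frontier (rect 1 1). \<forall>v\<in>frontier (rect 1 1).
          norm_ap a p (u - v) / L \<le> dist (f u) (f v) \<and> dist (f u) (f v) \<le> L * norm_ap a p (u - v)"
    and e: "\<And>s. 0 \<le> s \<Longrightarrow> s \<le> 1 \<Longrightarrow> e s \<in> frontier (rect 1 1)"
    and norm: "\<And>s t. norm_ap a p (e s - e t) = c * \<bar>s - t\<bar>"
    and dist: "\<And>s t. 0 \<le> s \<Longrightarrow> s \<le> 1 \<Longrightarrow> 0 \<le> t \<Longrightarrow> t \<le> 1 \<Longrightarrow>
      dist (f (e s)) (f (e t)) = k * \<bar>\<phi> s - \<phi> t\<bar>"
  shows "bilip01 (L^2) \<phi>"
proof (rule bilip01_if_scaled_bilip[OF L ck ends])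
  fix s t :: real assume st: "0 \<le> s" "s \<le> 1" "0 \<le> t" "t \<le> 1"
  then have "norm_ap a p (e s - e t) / L \<le> dist (f (e s)) (f (e t))
      \<and> dist (f (e s)) (f (e t)) \<le> L * norm_ap a p (e s - e t)"
    using bilip e[of s] e[of t] by blast
  then show "c * \<bar>s - t\<bar> / L \<le> k * \<bar>\<phi> s - \<phi> t\<bar> \<and> k * \<bar>\<phi> s - \<phi> t\<bar> \<le> L * c * \<bar>s - t\<bar>"
    using norm[of s t] dist[OF st] by (simp add: mult.assoc)
qed

lemma edge_reparametrisations:
  assumes L: "L \<ge> 1" and a: "0 < a"
    and M: "M = affine2 \<alpha> \<beta> \<gamma> \<delta> c1 c2" "\<alpha> * \<delta> - \<beta> * \<gamma> \<noteq> 0"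
    and bilip: "\<forall>u\<in>frontier (rect 1 1). \<forall>v\<in>frontier (rect 1 1).
          norm_ap a p (u - v) / L \<le> dist (f u) (f v) \<and> dist (f u) (f v) \<le> L * norm_ap a p (u - v)"
    and edges: "\<And>i. i < 4 \<Longrightarrow> f ` edge 1 1 i = M ` edge 1 1 i"
  obtains \<phi>b \<phi>t \<psi>l \<psi>r where "bilip01_quad (L^2) \<phi>b \<phi>t \<psi>l \<psi>r"
    "\<And>s. 0 \<le> s \<Longrightarrow> s \<le> 1 \<Longrightarrow> f (pt s 0) = M (pt (\<phi>b s) 0)"
    "\<And>s. 0 \<le> s \<Longrightarrow> s \<le> 1 \<Longrightarrow> f (pt s 1) = M (pt (\<phi>t s) 1)"
    "\<And>s. 0 \<le> s \<Longrightarrow> s \<le> 1 \<Longrightarrow> f (pt 0 s) = M (pt 0 (\<psi>l s))"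
    "\<And>s. 0 \<le> s \<Longrightarrow> s \<le> 1 \<Longrightarrow> f (pt 1 s) = M (pt 1 (\<psi>r s))"
proof -
  have "inj M" using inj_affine2[OF M(2)] M(1) by simp
  then obtain \<phi>b \<phi>t \<psi>l \<psi>r where
    ends: "\<phi>b 0 = 0" "\<phi>b 1 = 1" "\<phi>t 0 = 0" "\<phi>t 1 = 1" "\<psi>l 0 = 0" "\<psi>l 1 = 1" "\<psi>r 0 = 0" "\<psi>r 1 = 1"
    and f: "\<And>s. 0 \<le> s \<Longrightarrow> s \<le> 1 \<Longrightarrow> f (pt s 0) = M (pt (\<phi>b s) 0)"
      "\<And>s. 0 \<le> s \<Longrightarrow> s \<le> 1 \<Longrightarrow> f (pt s 1) = M (pt (\<phi>t s) 1)"
      "\<And>s. 0 \<le> s \<Longrightarrow> s \<le> 1 \<Longrightarrow> f (pt 0 s) = M (pt 0 (\<psi>l s))"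
      "\<And>s. 0 \<le> s \<Longrightarrow> s \<le> 1 \<Longrightarrow> f (pt 1 s) = M (pt 1 (\<psi>r s))"
    using edge_pullbacks[OF \<open>inj M\<close> edges] by blast
  have "\<alpha> \<noteq> 0 \<or> \<gamma> \<noteq> 0" "\<beta> \<noteq> 0 \<or> \<delta> \<noteq> 0" using M(2) by auto
  then have pos: "0 < \<alpha>^2 + \<gamma>^2" "0 < \<beta>^2 + \<delta>^2"
    by (simp_all add: sum_power2_gt_zero_iff)
  have frontier: "pt s 0 \<in> frontier (rect 1 1)" "pt s 1 \<in> frontier (rect 1 1)"
    "pt 0 s \<in> frontier (rect 1 1)" "pt 1 s \<in> frontier (rect 1 1)" if "0 \<le> s" "s \<le> 1" for s
    using that by (auto simp: frontier_rect mem_rect)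
  note facts = pos frontier a less_imp_le[OF a] a[THEN less_imp_neq, THEN not_sym] f M(1)
    norm_ap_horizontal norm_ap_vertical dist_affine2_horizontal dist_affine2_vertical
  have "bilip01 (L^2) \<phi>b"
    by (rule bilip01_of_edge[where e = "\<lambda>s. pt s 0" and c = a and k = "sqrt (\<alpha>^2 + \<gamma>^2)",
          OF L _ _ ends(1,2) bilip]) (simp_all add: facts)
  moreover have "bilip01 (L^2) \<phi>t"
    by (rule bilip01_of_edge[where e = "\<lambda>s. pt s 1" and c = a and k = "sqrt (\<alpha>^2 + \<gamma>^2)",
          OF L _ _ ends(3,4) bilip]) (simp_all add: facts)
  moreover have "bilip01 (L^2) \<psi>l"
    by (rule bilip01_of_edge[where e = "\<lambda>s. pt 0 s" and c = "a powr (p - 1)" and k = "sqrt (\<beta>^2 + \<delta>^2)",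
          OF L _ _ ends(5,6) bilip]) (simp_all add: facts)
  moreover have "bilip01 (L^2) \<psi>r"
    by (rule bilip01_of_edge[where e = "\<lambda>s. pt 1 s" and c = "a powr (p - 1)" and k = "sqrt (\<beta>^2 + \<delta>^2)",
          OF L _ _ ends(7,8) bilip]) (simp_all add: facts)
  ultimately have "bilip01_quad (L^2) \<phi>b \<phi>t \<psi>l \<psi>r"
    by (simp add: bilip01_quad_def bilip01_pair_def)
  then show ?thesis using that f by blast
qed

lemma abs_sum_mat2_mult_le:
  fixes \<alpha> \<beta> \<gamma> \<delta> p q r s :: real
  shows "\<bar>\<alpha> * p + \<beta> * r\<bar> + \<bar>\<alpha> * q + \<beta> * s\<bar> + \<bar>\<gamma> * p + \<delta> * r\<bar> + \<bar>\<gamma> * q + \<delta> * s\<bar> \<le>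
    (\<bar>\<alpha>\<bar> + \<bar>\<beta>\<bar> + \<bar>\<gamma>\<bar> + \<bar>\<delta>\<bar>) * (\<bar>p\<bar> + \<bar>q\<bar> + \<bar>r\<bar> + \<bar>s\<bar>)"
proof -
  have t: "\<bar>x*y + z*w\<bar> \<le> \<bar>x\<bar>*\<bar>y\<bar> + \<bar>z\<bar>*\<bar>w\<bar>" for x y z w :: real
    by (metis abs_mult abs_triangle_ineq)
  have n: "0 \<le> \<bar>x\<bar> * \<bar>y\<bar>" for x y :: real by simp
  have "(\<bar>\<alpha>\<bar> + \<bar>\<beta>\<bar> + \<bar>\<gamma>\<bar> + \<bar>\<delta>\<bar>) * (\<bar>p\<bar> + \<bar>q\<bar> + \<bar>r\<bar> + \<bar>s\<bar>) =
      (\<bar>\<alpha>\<bar>*\<bar>p\<bar> + \<bar>\<beta>\<bar>*\<bar>r\<bar>) + (\<bar>\<alpha>\<bar>*\<bar>q\<bar> + \<bar>\<beta>\<bar>*\<bar>s\<bar>) + (\<bar>\<gamma>\<bar>*\<bar>p\<bar> + \<bar>\<delta>\<bar>*\<bar>r\<bar>) + (\<bar>\<gamma>\<bar>*\<bar>q\<bar> + \<bar>\<delta>\<bar>*\<bar>s\<bar>)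
      + (\<bar>\<alpha>\<bar>*\<bar>r\<bar> + \<bar>\<alpha>\<bar>*\<bar>s\<bar> + \<bar>\<beta>\<bar>*\<bar>p\<bar> + \<bar>\<beta>\<bar>*\<bar>q\<bar> + \<bar>\<gamma>\<bar>*\<bar>r\<bar> + \<bar>\<gamma>\<bar>*\<bar>s\<bar> + \<bar>\<delta>\<bar>*\<bar>p\<bar> + \<bar>\<delta>\<bar>*\<bar>q\<bar>)"
    by (simp add: algebra_simps)
  then show ?thesis
    using t[of \<alpha> p \<beta> r] t[of \<alpha> q \<beta> s] t[of \<gamma> p \<delta> r] t[of \<gamma> q \<delta> s]
      n[of \<alpha> r] n[of \<alpha> s] n[of \<beta> p] n[of \<beta> q] n[of \<gamma> r] n[of \<gamma> s] n[of \<delta> p] n[of \<delta> q]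
    by linarith
qed

context bilip01_quad
begin

text \<open>Since \<open>\<bar>A\<bar>\<^sub>1 \<le> 2a\<close> and \<open>det A = a\<^sup>p\<close>, the factor \<open>a\<^sup>p\<close> coming from the operator norm is exactly
  compensated by the Jacobian; this is where the exponent \<open>p\<close> of the weighted norm enters.\<close>

lemma affine_square_map_distortion:
  assumes a: "0 < a" and p: "0 \<le> p"
    and A: "\<bar>\<alpha>\<bar> + \<bar>\<beta>\<bar> + \<bar>\<gamma>\<bar> + \<bar>\<delta>\<bar> \<le> 2 * a" "\<alpha> * \<delta> - \<beta> * \<gamma> = a powr p"
    and x: "x \<in> interior (rect 1 1)"
  obtains D where "((\<lambda>z. affine2 \<alpha> \<beta> \<gamma> \<delta> c1 c2 (square_map \<phi>b \<phi>t \<psi>l \<psi>r z)) has_derivative D) (at x)"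
    "onorm D powr p \<le> (100 * K^8) powr p * K^4 * det (matrix D)"
proof -
  have K: "0 < K" using hor.bot.K_pos .
  have "0 < x$1" "x$1 < 1" "0 < x$2" "x$2 < 1" using x by (auto simp: interior_rect)
  then obtain p' q' r' s' where G: "(square_map \<phi>b \<phi>t \<psi>l \<psi>r has_derivative mat2 p' q' r' s') (at x)"
    and sum: "\<bar>p'\<bar> + \<bar>q'\<bar> + \<bar>r'\<bar> + \<bar>s'\<bar> \<le> 50 * K^8" and det: "1 / K^4 \<le> p' * s' - q' * r'"
    by (rule square_map_deriv)
  define D where "D = mat2 (\<alpha> * p' + \<beta> * r') (\<alpha> * q' + \<beta> * s') (\<gamma> * p' + \<delta> * r') (\<gamma> * q' + \<delta> * s')"
  have "((\<lambda>z. affine2 \<alpha> \<beta> \<gamma> \<delta> c1 c2 (square_map \<phi>b \<phi>t \<psi>l \<psi>r z)) has_derivative D) (at x)"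
    using has_derivative_compose[OF G affine2_deriv] by (simp add: D_def mat2_mat2 fun_eq_iff)
  moreover have "onorm D powr p \<le> (100 * K^8) powr p * K^4 * det (matrix D)"
  proof -
    have "onorm D \<le> (\<bar>\<alpha>\<bar> + \<bar>\<beta>\<bar> + \<bar>\<gamma>\<bar> + \<bar>\<delta>\<bar>) * (\<bar>p'\<bar> + \<bar>q'\<bar> + \<bar>r'\<bar> + \<bar>s'\<bar>)"
      unfolding D_def using onorm_mat2_le abs_sum_mat2_mult_le by (rule order_trans)
    also have "\<dots> \<le> (2 * a) * (50 * K^8)" by (rule mult_mono[OF A(1) sum]) (use a in auto)
    finally have "onorm D \<le> 100 * K^8 * a" by (simp add: algebra_simps)
    moreover have "0 \<le> onorm D" unfolding D_def by (rule onorm_pos_le[OF bounded_linear_mat2])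
    ultimately have "onorm D powr p \<le> (100 * K^8 * a) powr p" using p by (intro powr_mono2) auto
    also have "\<dots> = (100 * K^8) powr p * K^4 * (a powr p * (1 / K^4))" using a K by (simp add: powr_mult)
    also have "\<dots> \<le> (100 * K^8) powr p * K^4 * (a powr p * (p' * s' - q' * r'))"
      using det K by (intro mult_left_mono) auto
    also have "a powr p * (p' * s' - q' * r') = det (matrix D)"
      unfolding D_def det_matrix_mat2 A(2)[symmetric] by (simp add: algebra_simps)
    finally show ?thesis .
  qed
  ultimately show ?thesis using that by blast
qed

end

definition distortion_const :: "real \<Rightarrow> real \<Rightarrow> real" where
  "distortion_const L p = (100 * (L^2)^8) powr p * (L^2)^4"

lemma extension_along_affine_map:
  assumes quad: "bilip01_quad (L^2) \<phi>b \<phi>t \<psi>l \<psi>r"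
    and a: "0 < a" and p: "0 \<le> p"
    and M: "M = affine2 \<alpha> \<beta> \<gamma> \<delta> c1 c2" "M ` rect 1 1 = rect a b"
    and A: "\<bar>\<alpha>\<bar> + \<bar>\<beta>\<bar> + \<bar>\<gamma>\<bar> + \<bar>\<delta>\<bar> \<le> 2 * a" "\<alpha> * \<delta> - \<beta> * \<gamma> = a powr p"
    and f: "\<And>s. 0 \<le> s \<Longrightarrow> s \<le> 1 \<Longrightarrow> f (pt s 0) = M (pt (\<phi>b s) 0)"
      "\<And>s. 0 \<le> s \<Longrightarrow> s \<le> 1 \<Longrightarrow> f (pt s 1) = M (pt (\<phi>t s) 1)"
      "\<And>s. 0 \<le> s \<Longrightarrow> s \<le> 1 \<Longrightarrow> f (pt 0 s) = M (pt 0 (\<psi>l s))"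
      "\<And>s. 0 \<le> s \<Longrightarrow> s \<le> 1 \<Longrightarrow> f (pt 1 s) = M (pt 1 (\<psi>r s))"
  shows "\<exists>F G. homeomorphism (rect 1 1) (rect a b) F G
          \<and> (\<forall>x\<in>frontier (rect 1 1). F x = f x)
          \<and> (AE x in lebesgue_on (rect 1 1).
               \<exists>D. (F has_derivative D) (at x) \<and> onorm D powr p \<le> distortion_const L p * det (matrix D))"
proof -
  interpret bilip01_quad "L^2" \<phi>b \<phi>t \<psi>l \<psi>r by (rule quad)
  define F where "F z = M (square_map \<phi>b \<phi>t \<psi>l \<psi>r z)" for z
  have "inj M" using inj_affine2[of \<alpha> \<delta> \<beta> \<gamma>] A(2) a M(1) by simp
  then have "inj_on F (rect 1 1)"
    unfolding F_def using inj_on_square_map by (auto simp: inj_on_def inj_def)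
  moreover have "continuous_on (rect 1 1) F"
    unfolding F_def M(1)
    by (intro continuous_on_compose2[OF continuous_on_affine2 continuous_on_square_map]) auto
  moreover have "F ` rect 1 1 = rect a b"
    unfolding F_def using square_map_image M(2) by (metis image_image)
  ultimately obtain G where "homeomorphism (rect 1 1) (rect a b) F G"
    using homeomorphism_compact[OF compact_rect] by blast
  moreover have "F x = f x" if x: "x \<in> frontier (rect 1 1)" for x
  proof -
    obtain s where "0 \<le> s" "s \<le> 1" "x = pt s 0 \<or> x = pt s 1 \<or> x = pt 0 s \<or> x = pt 1 s"
      using frontier_unit_square_cases[OF x] .
    then show ?thesis
      by (auto simp: F_def square_map_bottom square_map_top square_map_left square_map_right f)
  qed
  moreover have "AE x in lebesgue_on (rect 1 1).
      \<exists>D. (F has_derivative D) (at x) \<and> onorm D powr p \<le> distortion_const L p * det (matrix D)"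
  proof (rule AE_lebesgue_on_rect_if_interior)
    fix x assume "x \<in> interior (rect 1 1)"
    then obtain D where "((\<lambda>z. M (square_map \<phi>b \<phi>t \<psi>l \<psi>r z)) has_derivative D) (at x)"
      "onorm D powr p \<le> (100 * (L^2)^8) powr p * (L^2)^4 * det (matrix D)"
      using affine_square_map_distortion[OF a p A] unfolding M(1) by blast
    then show "\<exists>D. (F has_derivative D) (at x) \<and> onorm D powr p \<le> distortion_const L p * det (matrix D)"
      unfolding F_def[abs_def] distortion_const_def by blast
  qed
  ultimately show ?thesis by blast
qed

lemma bilipschitz_boundary_extension:
  fixes f :: "real^2 \<Rightarrow> real^2"
  assumes L: "L \<ge> 1" and p: "1 < p" "p < 2" and a: "a \<ge> 1"
    and hom: "homeomorphism (frontier (rect 1 1)) (frontier (rect a (a powr (p - 1)))) f g"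
    and orientation: "bdry_orientation_preserving f 1 1 a (a powr (p - 1))"
    and bilip: "\<forall>u\<in>frontier (rect 1 1). \<forall>v\<in>frontier (rect 1 1).
          norm_ap a p (u - v) / L \<le> dist (f u) (f v) \<and> dist (f u) (f v) \<le> L * norm_ap a p (u - v)"
    and edges: "\<forall>E\<in>rect_edges 1 1. f ` E \<in> rect_edges a (a powr (p - 1))"
  shows "\<exists>F G. homeomorphism (rect 1 1) (rect a (a powr (p - 1))) F G
          \<and> (\<forall>x\<in>frontier (rect 1 1). F x = f x)
          \<and> (AE x in lebesgue_on (rect 1 1).
               \<exists>D. (F has_derivative D) (at x) \<and> onorm D powr p \<le> distortion_const L p * det (matrix D))"
proof -
  define b where "b = a powr (p - 1)"
  have ab: "0 < a" "0 < b" "b \<le> a" "a * b = a powr p"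
    using a p powr_mono[of "p - 1" 1 a] by (auto simp: b_def powr_mult_base)
  obtain M where "M \<in> rect_rotations a b" and fM: "\<And>i. i < 4 \<Longrightarrow> f ` edge 1 1 i = M ` edge 1 1 i"
    using edge_maps_follow_rotation[OF ab(1,2)] hom orientation edges unfolding b_def by blast
  then have image: "M ` rect 1 1 = rect a b" using rect_rotation_image ab(1,2) by blast
  obtain \<alpha> \<beta> \<gamma> \<delta> c1 c2 where M: "M = affine2 \<alpha> \<beta> \<gamma> \<delta> c1 c2"
    and A: "\<alpha> * \<delta> - \<beta> * \<gamma> = a powr p" "\<bar>\<alpha>\<bar> + \<bar>\<beta>\<bar> + \<bar>\<gamma>\<bar> + \<bar>\<delta>\<bar> \<le> 2 * a"
    using rect_rotation_affine2[OF \<open>M \<in> rect_rotations a b\<close> ab(2,3)] ab(4) by metis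
  have det: "\<alpha> * \<delta> - \<beta> * \<gamma> \<noteq> 0" using A(1) ab(1) by simp
  obtain \<phi>b \<phi>t \<psi>l \<psi>r where "bilip01_quad (L^2) \<phi>b \<phi>t \<psi>l \<psi>r"
    "\<And>s. 0 \<le> s \<Longrightarrow> s \<le> 1 \<Longrightarrow> f (pt s 0) = M (pt (\<phi>b s) 0)"
    "\<And>s. 0 \<le> s \<Longrightarrow> s \<le> 1 \<Longrightarrow> f (pt s 1) = M (pt (\<phi>t s) 1)"
    "\<And>s. 0 \<le> s \<Longrightarrow> s \<le> 1 \<Longrightarrow> f (pt 0 s) = M (pt 0 (\<psi>l s))"
    "\<And>s. 0 \<le> s \<Longrightarrow> s \<le> 1 \<Longrightarrow> f (pt 1 s) = M (pt 1 (\<psi>r s))"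
    using edge_reparametrisations[OF L ab(1) M(1) det bilip fM] by blast
  from extension_along_affine_map[OF this(1) ab(1) _ M image A(2,1) this(2-5)] p
  show ?thesis unfolding b_def by simp
qed

theorem lemma10p1:
  fixes L p :: real
  assumes "L \<ge> 1" and "1 < p" and "p < 2"
  shows "\<exists>C::real. \<forall>(a::real) (f::real^2 \<Rightarrow> real^2).
    a \<ge> 1
    \<and> (\<exists>g. homeomorphism (frontier (rect 1 1)) (frontier (rect a (a powr (p - 1)))) f g)
    \<and> bdry_orientation_preserving f 1 1 a (a powr (p - 1))
    \<and> (\<forall>u\<in>frontier (rect 1 1). \<forall>v\<in>frontier (rect 1 1).
          norm_ap a p (u - v) / L \<le> dist (f u) (f v)
          \<and> dist (f u) (f v) \<le> L * norm_ap a p (u - v))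
    \<and> (\<forall>E\<in>rect_edges 1 1. f ` E \<in> rect_edges a (a powr (p - 1)))
    \<longrightarrow> (\<exists>F G. homeomorphism (rect 1 1) (rect a (a powr (p - 1))) F G
          \<and> (\<forall>x\<in>frontier (rect 1 1). F x = f x)
          \<and> (AE x in lebesgue_on (rect 1 1).
               \<exists>D. (F has_derivative D) (at x)
                   \<and> (onorm D) powr p \<le> C * det (matrix D)))"
  using bilipschitz_boundary_extension[OF assms] by blast

end
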